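(* Let $\{(\tilde{\mathbf u}_r^n,p_r^n)\}_{n}$ with $\tilde{\mathbf u}_r^n\in U_r$, $p_r^n\in Q_r$ be the solution of the reduced BDF2 incremental projection scheme described in the context. Then there is a constant $c>0$, independent of $\tau$, $\nu$, $f$, $U_r$ and $Q_r$, such that for all $n\ge 2$ \[ \|\tilde{\mathbf u}_r^{n}\|_0^2+\tau^2\|\nabla p_r^{n}\|_0^2+\tau^2\|\nabla(p_r^{n-1}-p_r^{n-2})\|_0^2+\sum_{k=2}^{N_t}\Big(\nu\tau\|\nabla\tilde{\mathbf u}_r^{k}\|_0^2+\tau^2\|\nabla(p_r^{k-1}-p_r^{k-2})\|_0^2\Big) \] \[ \le c\Big(\|\tilde{\mathbf u}_r^{0}\|_0^2+\|\tilde{\mathbf u}_r^{1}\|_0^2+\tau^2\|\nabla p_r^{0}\|_0^2+\tau^2\|\nabla p_r^{1}\|_0^2+\nu^{-1}\sum_{k=2}^{N_t}\tau\|f^k\|_{H^{-1}}^2\Big). \]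
   Context: $\Omega\subset\mathbb R^2$ is a bounded domain with smooth boundary, $\nu>0$ is the viscosity, $T>0$, $\tau>0$ is the time step, $N_t=[T/\tau]$, $t^k=k\tau$, and $f^{k}=f(t^k)\in H^{-1}(\Omega)^2$ with $\langle\cdot,\cdot\rangle$ the $H^{-1}$–$H_0^1$ duality. $\|\cdot\|_0$ and $(\cdot,\cdot)$ denote the $L^2(\Omega)$ norm and inner product. $U_r\subset H_0^1(\Omega)^2$ and $Q_r\subset H^1(\Omega)$ are finite-dimensional subspaces (the POD velocity and pressure spaces). Reduced scheme: given starting values $\tilde{\mathbf u}_r^0,\tilde{\mathbf u}_r^1\in U_r$ and $p_r^0,p_r^1\in Q_r$ (with the convention $p_r^{-1}:=p_r^0$), for $n\ge1$ find $\tilde{\mathbf u}_r^{n+1}\in U_r$, $p_r^{n+1}\in Q_r$ such that \[ \Big(\tfrac{3\tilde{\mathbf u}_r^{n+1}-4\tilde{\mathbf u}_r^{n}+\tilde{\mathbf u}_r^{n-1}}{2\tau},\mathbf v_r\Big)+\nu(\nabla\tilde{\mathbf u}_r^{n+1},\nabla\mathbf v_r)-\tfrac13\big(7p_r^n-5p_r^{n-1}+p_r^{n-2},\nabla\cdot\mathbf v_r\big)=\langle f^{n+1},\mathbf v_r\rangle\quad\forall\mathbf v_r\in U_r, \] \[ (\nabla\cdot\tilde{\mathbf u}_r^{n+1},q_r)+\tfrac{2\tau}{3}(\nabla p_r^{n+1},\nabla q_r)=\tfrac{2\tau}{3}(\nabla p_r^{n},\nabla q_r)\quad\forall q_r\in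 Q_r. \] *)

theory Defs
  imports "HOL-Analysis.Analysis"
begin

definition pd :: "2 \<Rightarrow> (real^2 \<Rightarrow> real) \<Rightarrow> real^2 \<Rightarrow> real" where
  "pd i f x = deriv (\<lambda>t. f (x + t *\<^sub>R axis i 1)) 0"

fun Ck :: "nat \<Rightarrow> (real^2 \<Rightarrow> real) \<Rightarrow> bool" where
  "Ck 0 f = continuous_on UNIV f"
| "Ck (Suc k) f = (continuous_on UNIV f \<and>
      (\<forall>i x. (\<lambda>t. f (x + t *\<^sub>R axis i 1)) differentiable (at 0)) \<and>
      (\<forall>i. Ck k (pd i f)))"

definition C_inf :: "(real^2 \<Rightarrow> real) \<Rightarrow> bool" where
  "C_inf f \<longleftrightarrow> (\<forall>k. Ck k f)"

definition smooth_bounded_domain :: "(real^2) set \<Rightarrow> bool" where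
  "smooth_bounded_domain \<Omega> \<longleftrightarrow> open \<Omega> \<and> connected \<Omega> \<and> \<Omega> \<noteq> {} \<and> bounded \<Omega> \<and>
     (\<exists>\<rho>. C_inf \<rho> \<and> \<Omega> = {x. \<rho> x < 0} \<and> (\<forall>x\<in>frontier \<Omega>. \<exists>i. pd i \<rho> x \<noteq> 0))"

definition test_fun :: "(real^2) set \<Rightarrow> (real^2 \<Rightarrow> real) \<Rightarrow> bool" where
  "test_fun \<Omega> \<phi> \<longleftrightarrow> C_inf \<phi> \<and> compact (closure {x. \<phi> x \<noteq> 0}) \<and> closure {x. \<phi> x \<noteq> 0} \<subseteq> \<Omega>"

definition L2 :: "(real^2) set \<Rightarrow> (real^2 \<Rightarrow> real) \<Rightarrow> bool" where
  "L2 \<Omega> g \<longleftrightarrow> set_borel_measurable lborel \<Omega> g \<and> set_integrable lborel \<Omega> (\<lambda>x. (g x)^2)"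

definition weak_pd :: "(real^2) set \<Rightarrow> 2 \<Rightarrow> (real^2 \<Rightarrow> real) \<Rightarrow> (real^2 \<Rightarrow> real) \<Rightarrow> bool" where
  "weak_pd \<Omega> i u g \<longleftrightarrow> (\<forall>\<phi>. test_fun \<Omega> \<phi> \<longrightarrow>
      (LINT x:\<Omega>|lborel. u x * pd i \<phi> x) = - (LINT x:\<Omega>|lborel. g x * \<phi> x))"

definition H1 :: "(real^2) set \<Rightarrow> (real^2 \<Rightarrow> real) \<Rightarrow> bool" where
  "H1 \<Omega> u \<longleftrightarrow> L2 \<Omega> u \<and> (\<forall>i. \<exists>g. L2 \<Omega> g \<and> weak_pd \<Omega> i u g)"

(* the (a.e. unique) weak partial derivative *)
definition wpd :: "(real^2) set \<Rightarrow> 2 \<Rightarrow> (real^2 \<Rightarrow> real) \<Rightarrow> real^2 \<Rightarrow> real" where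
  "wpd \<Omega> i u = (SOME g. L2 \<Omega> g \<and> weak_pd \<Omega> i u g)"

definition ipS :: "(real^2) set \<Rightarrow> (real^2 \<Rightarrow> real) \<Rightarrow> (real^2 \<Rightarrow> real) \<Rightarrow> real" where
  "ipS \<Omega> p q = (LINT x:\<Omega>|lborel. p x * q x)"

definition ipV :: "(real^2) set \<Rightarrow> (real^2 \<Rightarrow> real^2) \<Rightarrow> (real^2 \<Rightarrow> real^2) \<Rightarrow> real" where
  "ipV \<Omega> u v = (LINT x:\<Omega>|lborel. u x \<bullet> v x)"

definition gradS :: "(real^2) set \<Rightarrow> (real^2 \<Rightarrow> real) \<Rightarrow> (real^2 \<Rightarrow> real) \<Rightarrow> real" where
  "gradS \<Omega> p q = (\<Sum>i\<in>UNIV. ipS \<Omega> (wpd \<Omega> i p) (wpd \<Omega> i q))"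

definition comp :: "2 \<Rightarrow> (real^2 \<Rightarrow> real^2) \<Rightarrow> real^2 \<Rightarrow> real" where
  "comp j u = (\<lambda>x. u x $ j)"

definition gradV :: "(real^2) set \<Rightarrow> (real^2 \<Rightarrow> real^2) \<Rightarrow> (real^2 \<Rightarrow> real^2) \<Rightarrow> real" where
  "gradV \<Omega> u v = (\<Sum>j\<in>UNIV. gradS \<Omega> (comp j u) (comp j v))"

definition divg :: "(real^2) set \<Rightarrow> (real^2 \<Rightarrow> real^2) \<Rightarrow> real^2 \<Rightarrow> real" where
  "divg \<Omega> u = (\<lambda>x. \<Sum>j\<in>UNIV. wpd \<Omega> j (comp j u) x)"

definition H1norm2 :: "(real^2) set \<Rightarrow> (real^2 \<Rightarrow> real) \<Rightarrow> real" where
  "H1norm2 \<Omega> u = ipS \<Omega> u u + gradS \<Omega> u u"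

definition H01 :: "(real^2) set \<Rightarrow> (real^2 \<Rightarrow> real) \<Rightarrow> bool" where
  "H01 \<Omega> u \<longleftrightarrow> H1 \<Omega> u \<and>
     (\<forall>\<epsilon>>0. \<exists>\<phi>. test_fun \<Omega> \<phi> \<and> H1norm2 \<Omega> (\<lambda>x. u x - \<phi> x) < \<epsilon>)"

definition H01V :: "(real^2) set \<Rightarrow> (real^2 \<Rightarrow> real^2) \<Rightarrow> bool" where
  "H01V \<Omega> u \<longleftrightarrow> (\<forall>j. H01 \<Omega> (comp j u))"

definition Hminus1 :: "(real^2) set \<Rightarrow> ((real^2 \<Rightarrow> real^2) \<Rightarrow> real) \<Rightarrow> bool" where
  "Hminus1 \<Omega> F \<longleftrightarrow>
     (\<forall>u v. H01V \<Omega> u \<and> H01V \<Omega> v \<longrightarrow> F (\<lambda>x. u x + v x) = F u + F v) \<and>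
     (\<forall>a u. H01V \<Omega> u \<longrightarrow> F (\<lambda>x. a *\<^sub>R u x) = a * F u) \<and>
     (\<exists>C. \<forall>v. H01V \<Omega> v \<longrightarrow> \<bar>F v\<bar> \<le> C * sqrt (gradV \<Omega> v v))"

definition normHm1 :: "(real^2) set \<Rightarrow> ((real^2 \<Rightarrow> real^2) \<Rightarrow> real) \<Rightarrow> real" where
  "normHm1 \<Omega> F = Sup {\<bar>F v\<bar> | v. H01V \<Omega> v \<and> gradV \<Omega> v v \<le> 1}"

definition fin_dim_subspaceV :: "(real^2) set \<Rightarrow> (real^2 \<Rightarrow> real^2) set \<Rightarrow> bool" where
  "fin_dim_subspaceV \<Omega> U \<longleftrightarrow> U \<subseteq> {u. H01V \<Omega> u} \<and>
     (\<exists>B. finite B \<and> B \<subseteq> {u. H01V \<Omega> u} \<and> U = {(\<lambda>x. \<Sum>b\<in>B. c b *\<^sub>R b x) | c. True})"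

definition fin_dim_subspaceS :: "(real^2) set \<Rightarrow> (real^2 \<Rightarrow> real) set \<Rightarrow> bool" where
  "fin_dim_subspaceS \<Omega> Q \<longleftrightarrow> Q \<subseteq> {q. H1 \<Omega> q} \<and>
     (\<exists>B. finite B \<and> B \<subseteq> {q. H1 \<Omega> q} \<and> Q = {(\<lambda>x. \<Sum>b\<in>B. c b * b x) | c. True})"

end

theory Submission
  imports Defs "HOL-Library.Function_Algebras" "HOL-Computational_Algebra.Polynomial"
begin

(* Testing the momentum equation with the new velocity and the pressure equation with every
   discrete pressure turns the scheme into a two-step recursion for the velocities u^k and the
   scaled pressure gradients G^k = tau grad p^k in the L2 inner product. By the pressure
   equation, the projected velocity w^k = u^k - (2/3)(G^k - G^(k-1)) is orthogonal to every G^j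
   for k >= 2, and the BDF2 identity
     2 (3a - 4b + c, a) = |a|^2 + |2a - b|^2 - |b|^2 - |2b - c|^2 + |a - 2b + c|^2
   makes |w^k|^2 + |2w^k - w^(k-1)|^2 + (4/3)|G^k|^2 telescope, up to the forcing (absorbed by
   Young's inequality) and two start-up terms. Summing bounds every quantity of the estimate by
   the data, with c = 700.
   For this algebra to be valid for the Sobolev-space definitions, weak derivatives must be
   linear, i.e. unique almost everywhere (fundamental lemma of the calculus of variations, with
   smooth bumps built from exp (-1/t)), and (div v, p) = - (v, grad p) must hold for v in H^1_0
   (approximation by test functions). *)

section \<open>An energy estimate for an abstract BDF2 projection scheme\<close>

locale semi_inner_product =
  fixes S :: "'a::real_vector set" and ip :: "'a \<Rightarrow> 'a \<Rightarrow> real"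
  assumes subspace: "subspace S"
    and ip_add_left: "x \<in> S \<Longrightarrow> y \<in> S \<Longrightarrow> z \<in> S \<Longrightarrow> ip (x + y) z = ip x z + ip y z"
    and ip_scaleR_left: "x \<in> S \<Longrightarrow> z \<in> S \<Longrightarrow> ip (a *\<^sub>R x) z = a * ip x z"
    and ip_commute: "ip x y = ip y x"
    and ip_self_nonneg: "x \<in> S \<Longrightarrow> 0 \<le> ip x x"
begin

lemma mem_add [simp]: "x \<in> S \<Longrightarrow> y \<in> S \<Longrightarrow> x + y \<in> S"
  using subspace subspace_add by blast

lemma mem_diff [simp]: "x \<in> S \<Longrightarrow> y \<in> S \<Longrightarrow> x - y \<in> S"
  using subspace subspace_diff by blast

lemma mem_scaleR [simp]: "x \<in> S \<Longrightarrow> a *\<^sub>R x \<in> S"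
  using subspace subspace_mul by blast

lemma mem_zero [simp]: "0 \<in> S"
  using subspace subspace_0 by blast

lemma ip_add_right: "x \<in> S \<Longrightarrow> y \<in> S \<Longrightarrow> z \<in> S \<Longrightarrow> ip z (x + y) = ip z x + ip z y"
  by (metis ip_add_left ip_commute)

lemma ip_scaleR_right: "x \<in> S \<Longrightarrow> z \<in> S \<Longrightarrow> ip z (a *\<^sub>R x) = a * ip z x"
  by (metis ip_scaleR_left ip_commute)

lemma ip_minus_left: "x \<in> S \<Longrightarrow> z \<in> S \<Longrightarrow> ip (- x) z = - ip x z"
  using ip_scaleR_left[of x z "-1"] by simp

lemma ip_minus_right: "x \<in> S \<Longrightarrow> z \<in> S \<Longrightarrow> ip z (- x) = - ip z x"
  by (metis ip_minus_left ip_commute)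

lemma ip_diff_left: "x \<in> S \<Longrightarrow> y \<in> S \<Longrightarrow> z \<in> S \<Longrightarrow> ip (x - y) z = ip x z - ip y z"
  using ip_add_left[of x "- y" z] ip_minus_left subspace subspace_neg by fastforce

lemma ip_diff_right: "x \<in> S \<Longrightarrow> y \<in> S \<Longrightarrow> z \<in> S \<Longrightarrow> ip z (x - y) = ip z x - ip z y"
  by (metis ip_diff_left ip_commute)

lemma ip_zero_left: "z \<in> S \<Longrightarrow> ip 0 z = 0"
  using ip_scaleR_left[of 0 z 0] by simp

lemma ip_zero_right: "z \<in> S \<Longrightarrow> ip z 0 = 0"
  by (metis ip_zero_left ip_commute)

lemmas ip_simps = ip_add_left ip_add_right ip_scaleR_left ip_scaleR_right ip_minus_left
  ip_minus_right ip_diff_left ip_diff_right ip_zero_left ip_zero_right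

definition sqnorm :: "'a \<Rightarrow> real" where
  "sqnorm x = ip x x"

lemma sqnorm_nonneg: "x \<in> S \<Longrightarrow> 0 \<le> sqnorm x"
  unfolding sqnorm_def by (rule ip_self_nonneg)

lemma sqnorm_scaleR: "x \<in> S \<Longrightarrow> sqnorm (a *\<^sub>R x) = a\<^sup>2 * sqnorm x"
  unfolding sqnorm_def by (simp add: ip_simps power2_eq_square)

lemma ip_ge_neg_sqnorms: "x \<in> S \<Longrightarrow> y \<in> S \<Longrightarrow> - sqnorm x - sqnorm y \<le> 2 * ip x y"
  using ip_self_nonneg[of "x + y"] by (simp add: sqnorm_def ip_simps ip_commute[of y x])

lemma sqnorm_add_le: "x \<in> S \<Longrightarrow> y \<in> S \<Longrightarrow> sqnorm (x + y) \<le> 2 * sqnorm x + 2 * sqnorm y"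
  using ip_self_nonneg[of "x - y"] by (simp add: sqnorm_def ip_simps ip_commute[of y x])

lemma sqnorm_diff_le: "x \<in> S \<Longrightarrow> y \<in> S \<Longrightarrow> sqnorm (x - y) \<le> 2 * sqnorm x + 2 * sqnorm y"
  using ip_self_nonneg[of "x + y"] by (simp add: sqnorm_def ip_simps ip_commute[of y x])

lemma sqnorm_add4_le:
  assumes "x \<in> S" "y \<in> S" "z \<in> S" "t \<in> S"
  shows "sqnorm (x + y + z + t) \<le> 4 * (sqnorm x + sqnorm y + sqnorm z + sqnorm t)"
proof -
  have "sqnorm ((x + y) + (z + t)) \<le> 2 * sqnorm (x + y) + 2 * sqnorm (z + t)"
    using assms by (intro sqnorm_add_le) simp_all
  moreover have "sqnorm (x + y) \<le> 2 * sqnorm x + 2 * sqnorm y"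
    using assms by (intro sqnorm_add_le)
  moreover have "sqnorm (z + t) \<le> 2 * sqnorm z + 2 * sqnorm t"
    using assms by (intro sqnorm_add_le)
  ultimately show ?thesis by (simp add: add.assoc)
qed

lemma bdf2_identity:
  assumes "a \<in> S" "b \<in> S" "c \<in> S"
  shows "2 * ip (3 *\<^sub>R a - 4 *\<^sub>R b + c) a
    = sqnorm a + sqnorm (2 *\<^sub>R a - b) - sqnorm b - sqnorm (2 *\<^sub>R b - c) + sqnorm (a - 2 *\<^sub>R b + c)"
  using assms
  by (simp add: sqnorm_def ip_simps ip_commute[of b a] ip_commute[of c a] ip_commute[of c b]
      algebra_simps)

end

lemma young_forcing:
  fixes F g A \<nu> :: real
  assumes "\<bar>F\<bar> \<le> g * sqrt A" "0 \<le> A" "0 < \<nu>"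
  shows "2 * F \<le> \<nu> * A + g\<^sup>2 / \<nu>"
proof -
  define s where "s = sqrt A"
  have "0 \<le> (\<nu> * s - g)\<^sup>2" by simp
  then have "2 * \<nu> * (g * s) \<le> \<nu>\<^sup>2 * s\<^sup>2 + g\<^sup>2"
    by (simp add: power2_eq_square algebra_simps)
  then have "2 * (g * s) \<le> \<nu> * s\<^sup>2 + g\<^sup>2 / \<nu>"
    using assms(3) by (simp add: field_simps power2_eq_square)
  moreover have "F \<le> g * s" and "A = s\<^sup>2"
    using assms(1,2) unfolding s_def by auto
  ultimately show ?thesis by simp
qed

text \<open>Abstract form of the scheme: \<open>G k\<close> stands for \<open>\<tau> \<nabla>p\<^sup>k\<close>, \<open>A k\<close> for \<open>\<parallel>\<nabla>u\<^sup>k\<parallel>\<^sup>2\<close>,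
  \<open>F k\<close> for \<open>\<langle>f\<^sup>k, u\<^sup>k\<rangle>\<close> and \<open>Fnorm k\<close> for \<open>\<parallel>f\<^sup>k\<parallel>\<^sub>-\<^sub>1\<close>. The momentum equation is tested with
  \<open>u\<^sup>n\<^sup>+\<^sup>1\<close> (its pressure term integrated by parts), the pressure equation with every \<open>p\<^sup>j\<close>.\<close>

locale bdf2_scheme = semi_inner_product S ip for S :: "'a::real_vector set" and ip +
  fixes N :: nat and \<tau> \<nu> :: real and u G :: "nat \<Rightarrow> 'a" and A F Fnorm :: "nat \<Rightarrow> real"
  assumes tau_pos: "0 < \<tau>" and nu_pos: "0 < \<nu>"
    and u_mem: "\<And>k. k \<le> N \<Longrightarrow> u k \<in> S" and G_mem: "\<And>k. k \<le> N \<Longrightarrow> G k \<in> S"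
    and momentum: "\<And>n. 1 \<le> n \<Longrightarrow> n + 1 \<le> N \<Longrightarrow>
      ip (3 *\<^sub>R u (n+1) - 4 *\<^sub>R u n + u (n-1)) (u (n+1)) / (2 * \<tau>) + \<nu> * A (n+1)
      + ip (7 *\<^sub>R G n - 5 *\<^sub>R G (n-1) + G (n-2)) (u (n+1)) / (3 * \<tau>) = F (n+1)"
    and pressure: "\<And>n j. 1 \<le> n \<Longrightarrow> n + 1 \<le> N \<Longrightarrow> j \<le> N \<Longrightarrow>
      ip (u (n+1)) (G j) = (2/3) * ip (G (n+1) - G n) (G j)"
    and forcing: "\<And>k. 2 \<le> k \<Longrightarrow> k \<le> N \<Longrightarrow> \<bar>F k\<bar> \<le> Fnorm k * sqrt (A k) \<and> 0 \<le> A k"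
begin

definition incr :: "nat \<Rightarrow> 'a" where
  "incr k = (2/3) *\<^sub>R (G k - G (k-1))"

definition proj :: "nat \<Rightarrow> 'a" where
  "proj k = u k - incr k"

definition energy :: "nat \<Rightarrow> real" where
  "energy k = sqnorm (proj k) + sqnorm (2 *\<^sub>R proj k - proj (k-1)) + (4/3) * sqnorm (G k)"

text \<open>\<open>proj k\<close> is orthogonal to all pressure gradients only from \<open>k = 2\<close> on, so the cross term
  \<open>ip (- 4 *\<^sub>R proj n + proj (n-1)) (incr (n+1))\<close> of the energy step survives exactly in
  the two start-up steps; \<open>startup n\<close> is what remains of it.\<close>

definition startup :: "nat \<Rightarrow> 'a" where
  "startup n = (if 2 \<le> n then 0 else (-4) *\<^sub>R proj n) + (if 3 \<le> n then 0 else proj (n-1))"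

definition data :: real where
  "data = sqnorm (u 0) + sqnorm (u 1) + sqnorm (G 0) + sqnorm (G 1)"

definition forcing_sum :: real where
  "forcing_sum = (\<Sum>k=2..N. \<tau> * (Fnorm k)\<^sup>2)"

lemma incr_mem [simp]: "k \<le> N \<Longrightarrow> incr k \<in> S"
  unfolding incr_def using G_mem by simp

lemma proj_mem [simp]: "k \<le> N \<Longrightarrow> proj k \<in> S"
  unfolding proj_def using u_mem by simp

lemma startup_mem [simp]: "n \<le> N \<Longrightarrow> startup n \<in> S"
  unfolding startup_def by simp

lemma proj_orth_G:
  assumes "2 \<le> k" "k \<le> N" "j \<le> N"
  shows "ip (proj k) (G j) = 0"
proof -
  have "ip (u (k-1+1)) (G j) = (2/3) * ip (G (k-1+1) - G (k-1)) (G j)"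
    using pressure[of "k-1" j] assms by simp
  then show ?thesis
    using assms u_mem G_mem by (simp add: proj_def incr_def ip_simps)
qed

lemma proj_orth_incr: "2 \<le> k \<Longrightarrow> k \<le> N \<Longrightarrow> j \<le> N \<Longrightarrow> ip (proj k) (incr j) = 0"
  unfolding incr_def using proj_orth_G[of k j] proj_orth_G[of k "j-1"] G_mem
  by (simp add: ip_simps)

lemma momentum_proj:
  assumes n: "1 \<le> n" "n + 1 \<le> N"
  shows "ip (3 *\<^sub>R proj (n+1) - 4 *\<^sub>R proj n + proj (n-1) + 3 *\<^sub>R incr (n+1)) (proj (n+1) + incr (n+1))
      + 2 * ip (G n) (incr (n+1)) + 2 * \<nu> * \<tau> * A (n+1) = 2 * \<tau> * F (n+1)"
proof -
  let ?X = "3 *\<^sub>R proj (n+1) - 4 *\<^sub>R proj n + proj (n-1) + 3 *\<^sub>R incr (n+1)"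
  let ?D = "3 *\<^sub>R u (n+1) - 4 *\<^sub>R u n + u (n-1)"
  let ?P = "7 *\<^sub>R G n - 5 *\<^sub>R G (n-1) + G (n-2)"
  have mem: "u (n+1) \<in> S" "u n \<in> S" "u (n-1) \<in> S" "G (n+1) \<in> S" "G n \<in> S" "G (n-1) \<in> S"
    "G (n-2) \<in> S" using u_mem G_mem n by auto
  have u_eq: "proj (n+1) + incr (n+1) = u (n+1)"
    by (simp add: proj_def)
  have orth: "ip (G n) (proj (n+1)) = 0"
    using proj_orth_G[of "n+1" n] n ip_commute by simp
  have "ip ?X (proj (n+1) + incr (n+1)) + 2 * ip (G n) (incr (n+1)) = ip ?X (u (n+1)) + 2 * ip (G n) (u (n+1))"
    using mem orth by (simp add: u_eq[symmetric] ip_simps proj_def incr_def)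
  also have "\<dots> = ip ?D (u (n+1)) + (2/3) * ip ?P (u (n+1))"
    using mem n by (simp add: proj_def incr_def ip_simps algebra_simps numeral_2_eq_2)
  also have "\<dots> = 2 * \<tau> * F (n+1) - 2 * \<nu> * \<tau> * A (n+1)"
    using momentum[OF n] tau_pos by (simp add: field_simps)
  finally show ?thesis by simp
qed

lemma energy_step:
  assumes n: "1 \<le> n" "n + 1 \<le> N"
  shows "energy (n+1) + 2 * sqnorm (incr (n+1)) + 2 * \<nu> * \<tau> * A (n+1)
    \<le> energy n + 2 * \<tau> * (Fnorm (n+1))\<^sup>2 / \<nu> + sqnorm (startup n)"
proof -
  have mem: "G (n+1) \<in> S" "G n \<in> S" "proj (n+1) \<in> S" "proj n \<in> S" "proj (n-1) \<in> S"
    "incr (n+1) \<in> S" using G_mem n by auto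
  have expand: "ip (3 *\<^sub>R proj (n+1) - 4 *\<^sub>R proj n + proj (n-1) + 3 *\<^sub>R incr (n+1)) (proj (n+1) + incr (n+1))
     = ip (3 *\<^sub>R proj (n+1) - 4 *\<^sub>R proj n + proj (n-1)) (proj (n+1))
       + ip (- 4 *\<^sub>R proj n + proj (n-1)) (incr (n+1)) + 3 * sqnorm (incr (n+1))"
    using mem proj_orth_incr[of "n+1" "n+1"] n
    by (simp add: sqnorm_def ip_simps ip_commute[of "incr (Suc n)" "proj (Suc n)"] algebra_simps)
  have pressure_term: "2 * ip (G n) (incr (n+1))
      = (2/3) * (sqnorm (G (n+1)) - sqnorm (G n)) - (3/2) * sqnorm (incr (n+1))"
    using mem by (simp add: incr_def sqnorm_def ip_simps ip_commute[of "G n" "G (Suc n)"] algebra_simps)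
  have cross_term: "ip (- 4 *\<^sub>R proj n + proj (n-1)) (incr (n+1)) = ip (startup n) (incr (n+1))"
    using mem proj_orth_incr[of n "n+1"] proj_orth_incr[of "n-1" "n+1"] n
    by (cases "2 \<le> n"; cases "3 \<le> n") (auto simp: startup_def ip_simps)
  have "- sqnorm (startup n) - sqnorm (incr (n+1)) \<le> 2 * ip (startup n) (incr (n+1))"
    using n by (intro ip_ge_neg_sqnorms) simp_all
  moreover have "2 * ip (3 *\<^sub>R proj (n+1) - 4 *\<^sub>R proj n + proj (n-1)) (proj (n+1))
     = sqnorm (proj (n+1)) + sqnorm (2 *\<^sub>R proj (n+1) - proj n) - sqnorm (proj n)
       - sqnorm (2 *\<^sub>R proj n - proj (n-1)) + sqnorm (proj (n+1) - 2 *\<^sub>R proj n + proj (n-1))"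
    using mem by (intro bdf2_identity)
  moreover have "0 \<le> sqnorm (proj (n+1) - 2 *\<^sub>R proj n + proj (n-1))"
    using mem by (intro sqnorm_nonneg) simp
  moreover have "2 * \<tau> * F (n+1) \<le> \<nu> * \<tau> * A (n+1) + \<tau> * (Fnorm (n+1))\<^sup>2 / \<nu>"
  proof -
    have "2 * F (n+1) \<le> \<nu> * A (n+1) + (Fnorm (n+1))\<^sup>2 / \<nu>"
      using forcing[of "n+1"] n nu_pos by (intro young_forcing) auto
    from mult_left_mono[OF this, of \<tau>] show ?thesis
      using tau_pos by (simp add: algebra_simps)
  qed
  ultimately show ?thesis
    using momentum_proj[OF n] expand pressure_term cross_term
    by (simp add: energy_def algebra_simps)
qed

lemma energy_telescoped:
  assumes "1 \<le> m" "m \<le> N"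
  shows "energy m + (\<Sum>k=2..m. 2 * sqnorm (incr k) + 2 * \<nu> * \<tau> * A k)
    \<le> energy 1 + (\<Sum>n=1..<m. sqnorm (startup n)) + (\<Sum>k=2..m. 2 * \<tau> * (Fnorm k)\<^sup>2 / \<nu>)"
  using assms
proof (induction m rule: nat_induct_at_least)
  case base
  then show ?case by simp
next
  case (Suc m)
  have "energy (Suc m) + 2 * sqnorm (incr (Suc m)) + 2 * \<nu> * \<tau> * A (Suc m)
      \<le> energy m + 2 * \<tau> * (Fnorm (Suc m))\<^sup>2 / \<nu> + sqnorm (startup m)"
    using energy_step[of m] Suc by simp
  moreover have "{2..Suc m} = insert (Suc m) {2..m}" "{1..<Suc m} = insert m {1..<m}"
    using Suc by auto
  ultimately show ?case
    using Suc by simp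
qed

lemma startup_sum_le:
  assumes "m \<le> N" "2 \<le> N"
  shows "(\<Sum>n=1..<m. sqnorm (startup n)) \<le> sqnorm (startup 1) + sqnorm (startup 2)"
proof -
  have "(\<Sum>n=1..<m. sqnorm (startup n)) = (\<Sum>n\<in>{1..<m} \<inter> {1,2}. sqnorm (startup n))"
    by (rule sum.mono_neutral_right) (auto simp: startup_def sqnorm_def ip_zero_left)
  also have "\<dots> \<le> (\<Sum>n\<in>{1,2}. sqnorm (startup n))"
    using assms by (intro sum_mono2) (auto intro: sqnorm_nonneg)
  finally show ?thesis by simp
qed

text \<open>Recall \<open>0 - 1 = 0\<close> on \<^typ>\<open>nat\<close>, so \<open>incr 0 = 0\<close> and \<open>proj 0 = u 0\<close>.\<close>

lemma startup_le_data:
  assumes "2 \<le> N"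
  shows "energy 1 + sqnorm (startup 1) + sqnorm (startup 2) \<le> 90 * data"
proof -
  have mem: "u 0 \<in> S" "u 1 \<in> S" "G 0 \<in> S" "G 1 \<in> S" using u_mem G_mem assms by auto
  have nonneg: "0 \<le> sqnorm (u 0)" "0 \<le> sqnorm (u 1)" "0 \<le> sqnorm (G 0)" "0 \<le> sqnorm (G 1)"
    using mem sqnorm_nonneg by auto
  have comb: "sqnorm (a *\<^sub>R u 0 + b *\<^sub>R u 1 + c *\<^sub>R G 1 + d *\<^sub>R G 0)
      \<le> 4 * (a\<^sup>2 * sqnorm (u 0) + b\<^sup>2 * sqnorm (u 1) + c\<^sup>2 * sqnorm (G 1) + d\<^sup>2 * sqnorm (G 0))" for a b c d
    using sqnorm_add4_le[of "a *\<^sub>R u 0" "b *\<^sub>R u 1" "c *\<^sub>R G 1" "d *\<^sub>R G 0"] mem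
    by (simp add: sqnorm_scaleR)
  have "sqnorm (proj 1) = sqnorm (0 *\<^sub>R u 0 + 1 *\<^sub>R u 1 + (-2/3) *\<^sub>R G 1 + (2/3) *\<^sub>R G 0)"
    using mem by (simp add: proj_def incr_def sqnorm_def ip_simps algebra_simps)
  then have b1: "sqnorm (proj 1) \<le> 4 * data"
    using comb[of 0 1 "-2/3" "2/3"] nonneg by (simp add: data_def power2_eq_square)
  have "sqnorm (2 *\<^sub>R proj 1 - proj 0) = sqnorm ((-1) *\<^sub>R u 0 + 2 *\<^sub>R u 1 + (-4/3) *\<^sub>R G 1 + (4/3) *\<^sub>R G 0)"
    using mem by (simp add: proj_def incr_def sqnorm_def ip_simps algebra_simps)
  then have b2: "sqnorm (2 *\<^sub>R proj 1 - proj 0) \<le> 16 * data"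
    using comb[of "-1" 2 "-4/3" "4/3"] nonneg by (simp add: data_def power2_eq_square)
  have "sqnorm (startup 1) = sqnorm (1 *\<^sub>R u 0 + (-4) *\<^sub>R u 1 + (8/3) *\<^sub>R G 1 + (-8/3) *\<^sub>R G 0)"
    using mem by (simp add: startup_def proj_def incr_def sqnorm_def ip_simps algebra_simps)
  then have b3: "sqnorm (startup 1) \<le> 64 * data"
    using comb[of 1 "-4" "8/3" "-8/3"] nonneg by (simp add: data_def power2_eq_square)
  have "sqnorm (startup 2) = sqnorm (proj 1)"
    by (simp add: startup_def)
  then show ?thesis
    using b1 b2 b3 nonneg by (simp add: energy_def data_def)
qed

lemma energy_dissipation_le:
  assumes "2 \<le> m" "m \<le> N"
  shows "energy m + (\<Sum>k=2..m. 2 * sqnorm (incr k) + 2 * \<nu> * \<tau> * A k)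
    \<le> 90 * data + 2 * forcing_sum / \<nu>"
proof -
  have "(\<Sum>k=2..m. 2 * \<tau> * (Fnorm k)\<^sup>2 / \<nu>) \<le> (\<Sum>k=2..N. 2 * \<tau> * (Fnorm k)\<^sup>2 / \<nu>)"
    using assms nu_pos tau_pos by (intro sum_mono2) auto
  also have "\<dots> = 2 * forcing_sum / \<nu>"
    by (simp add: forcing_sum_def sum_divide_distrib sum_distrib_left mult.assoc)
  finally show ?thesis
    using energy_telescoped[of m] startup_sum_le[of m] startup_le_data assms by simp
qed

lemma data_nonneg: "1 \<le> N \<Longrightarrow> 0 \<le> data"
  unfolding data_def using u_mem G_mem sqnorm_nonneg by (simp add: add_nonneg_nonneg)

lemma energy_nonneg: "k \<le> N \<Longrightarrow> 0 \<le> energy k"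
  unfolding energy_def using sqnorm_nonneg proj_mem G_mem
  by (simp add: add_nonneg_nonneg)

lemma dissipation_term_nonneg: "2 \<le> k \<Longrightarrow> k \<le> N \<Longrightarrow> 0 \<le> 2 * sqnorm (incr k) + 2 * \<nu> * \<tau> * A k"
  using sqnorm_nonneg[of "incr k"] forcing[of k] nu_pos tau_pos by simp

lemma pressure_diff_eq_incr:
  assumes "3 \<le> k" "k \<le> N"
  shows "sqnorm (G (k-1) - G (k-2)) = (9/4) * sqnorm (incr (k-1))"
proof -
  have "k - 1 - 1 = k - 2" by simp
  then have "sqnorm (incr (k-1)) = (2/3)\<^sup>2 * sqnorm (G (k-1) - G (k-2))"
    using assms G_mem by (simp add: incr_def sqnorm_scaleR)
  then show ?thesis by (simp add: power2_eq_square)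
qed

lemma pressure_diff_first_le: "1 \<le> N \<Longrightarrow> sqnorm (G 1 - G 0) \<le> 2 * data"
  using sqnorm_diff_le[of "G 1" "G 0"] G_mem u_mem sqnorm_nonneg[of "u 0"] sqnorm_nonneg[of "u 1"]
  by (simp add: data_def)

lemma pressure_diff_sum_le:
  assumes "2 \<le> N"
  shows "(\<Sum>k=2..N. sqnorm (G (k-1) - G (k-2))) \<le> 2 * data + (9/4) * (\<Sum>k=2..N. sqnorm (incr k))"
proof -
  have "(\<Sum>k=2..N. sqnorm (G (k-1) - G (k-2)))
      = sqnorm (G 1 - G 0) + (\<Sum>k=Suc 2..N. sqnorm (G (k-1) - G (k-2)))"
    using assms by (simp add: sum.atLeast_Suc_atMost)
  also have "(\<Sum>k=Suc 2..N. sqnorm (G (k-1) - G (k-2))) = (\<Sum>k=Suc 2..N. (9/4) * sqnorm (incr (k-1)))"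
    by (intro sum.cong refl pressure_diff_eq_incr) auto
  also have "\<dots> = (9/4) * (\<Sum>k=Suc 2..Suc (N-1). sqnorm (incr (k-1)))"
    using assms by (simp add: sum_distrib_left)
  also have "(\<Sum>k=Suc 2..Suc (N-1). sqnorm (incr (k-1))) = (\<Sum>k=2..N-1. sqnorm (incr k))"
    by (subst sum.shift_bounds_cl_Suc_ivl) simp
  also have "\<dots> \<le> (\<Sum>k=2..N. sqnorm (incr k))"
    by (intro sum_mono2) (auto intro: sqnorm_nonneg)
  finally show ?thesis
    using pressure_diff_first_le assms by simp
qed

definition dissipation :: real where
  "dissipation = (\<Sum>k=2..N. 2 * sqnorm (incr k) + 2 * \<nu> * \<tau> * A k)"

lemma dissipation_nonneg: "0 \<le> dissipation"
  unfolding dissipation_def using dissipation_term_nonneg by (intro sum_nonneg) auto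

lemma dissipation_le: "2 \<le> N \<Longrightarrow> dissipation \<le> 90 * data + 2 * forcing_sum / \<nu>"
  using energy_dissipation_le[of N] energy_nonneg[of N] by (simp add: dissipation_def)

lemma energy_le:
  assumes "2 \<le> n" "n \<le> N"
  shows "energy n \<le> 90 * data + 2 * forcing_sum / \<nu>"
proof -
  have "0 \<le> (\<Sum>k=2..n. 2 * sqnorm (incr k) + 2 * \<nu> * \<tau> * A k)"
    using dissipation_term_nonneg assms by (intro sum_nonneg) auto
  then show ?thesis
    using energy_dissipation_le[OF assms] by simp
qed

lemma incr_le_dissipation:
  assumes "2 \<le> k" "k \<le> N"
  shows "2 * sqnorm (incr k) \<le> dissipation"
proof -
  have "2 * sqnorm (incr k) + 2 * \<nu> * \<tau> * A k \<le> dissipation"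
    unfolding dissipation_def using assms dissipation_term_nonneg by (intro member_le_sum) auto
  moreover have "0 \<le> \<nu> * \<tau> * A k"
    using forcing[OF assms] nu_pos tau_pos by simp
  ultimately show ?thesis by simp
qed

lemma incr_sum_le_dissipation: "(\<Sum>k=2..N. sqnorm (incr k)) \<le> dissipation / 2"
  and A_sum_le_dissipation: "(\<Sum>k=2..N. \<nu> * \<tau> * A k) \<le> dissipation / 2"
  unfolding dissipation_def sum_divide_distrib using forcing nu_pos tau_pos sqnorm_nonneg[OF incr_mem]
  by (auto intro!: sum_mono)

lemma pressure_diff_le_dissipation:
  assumes "2 \<le> n" "n \<le> N"
  shows "sqnorm (G (n-1) - G (n-2)) \<le> 2 * data + (9/8) * dissipation"
proof (cases "n = 2")
  case True
  then show ?thesis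
    using pressure_diff_first_le dissipation_nonneg assms by simp
next
  case False
  then have "2 * sqnorm (incr (n-1)) \<le> dissipation"
    using assms by (intro incr_le_dissipation) auto
  then show ?thesis
    using False pressure_diff_eq_incr[of n] data_nonneg assms by simp
qed

theorem stability:
  assumes "2 \<le> n" "n \<le> N"
  shows "sqnorm (u n) + sqnorm (G n) + sqnorm (G (n-1) - G (n-2))
      + (\<Sum>k=2..N. \<nu> * \<tau> * A k + sqnorm (G (k-1) - G (k-2)))
    \<le> 700 * (data + forcing_sum / \<nu>)"
proof -
  have "sqnorm (u n) \<le> 2 * sqnorm (proj n) + 2 * sqnorm (incr n)"
    using sqnorm_add_le[of "proj n" "incr n"] proj_mem[of n] incr_mem[of n] assms
    by (simp add: proj_def)
  moreover have "sqnorm (proj n) \<le> energy n" "sqnorm (G n) \<le> (3/4) * energy n"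
    using sqnorm_nonneg proj_mem G_mem assms by (simp_all add: energy_def add_nonneg_nonneg)
  moreover have "(\<Sum>k=2..N. sqnorm (G (k-1) - G (k-2))) \<le> 2 * data + (9/8) * dissipation"
    using pressure_diff_sum_le incr_sum_le_dissipation assms by simp
  moreover have "0 \<le> forcing_sum / \<nu>"
    using tau_pos nu_pos by (simp add: forcing_sum_def sum_nonneg)
  ultimately show ?thesis
    using energy_le[OF assms] incr_le_dissipation[OF assms] pressure_diff_le_dissipation[OF assms]
      A_sum_le_dissipation dissipation_le dissipation_nonneg data_nonneg assms
    by (simp add: sum.distrib)
qed

end

section \<open>Square-integrable functions on a domain\<close>

lemma L2_measurable: "L2 \<Omega> f \<Longrightarrow> (\<lambda>x. indicator \<Omega> x * f x) \<in> borel_measurable lborel"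
  unfolding L2_def set_borel_measurable_def by simp

lemma indicator_mult_square: "indicator \<Omega> x *\<^sub>R (f x)\<^sup>2 = (indicator \<Omega> x * f x)\<^sup>2"
  for f :: "'a \<Rightarrow> real" by (cases "x \<in> \<Omega>") auto

lemma L2_square_integrable: "L2 \<Omega> f \<Longrightarrow> integrable lborel (\<lambda>x. (indicator \<Omega> x * f x)\<^sup>2)"
  unfolding L2_def set_integrable_def indicator_mult_square by simp

lemma L2I:
  "(\<lambda>x. indicator \<Omega> x * f x) \<in> borel_measurable lborel \<Longrightarrow>
    integrable lborel (\<lambda>x. (indicator \<Omega> x * f x)\<^sup>2) \<Longrightarrow> L2 \<Omega> f"
  unfolding L2_def set_integrable_def set_borel_measurable_def indicator_mult_square by simp

lemma abs_mult_le_sum_squares: "\<bar>a * b\<bar> \<le> a\<^sup>2 + b\<^sup>2" for a b :: real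
proof -
  have "2 * \<bar>a\<bar> * \<bar>b\<bar> \<le> a\<^sup>2 + b\<^sup>2"
    using sum_squares_bound[of "\<bar>a\<bar>" "\<bar>b\<bar>"] by simp
  moreover have "0 \<le> \<bar>a\<bar> * \<bar>b\<bar>" by simp
  ultimately show ?thesis unfolding abs_mult by linarith
qed

lemma L2_mult_integrable:
  assumes f: "L2 \<Omega> f" and g: "L2 \<Omega> g"
  shows "integrable lborel (\<lambda>x. indicator \<Omega> x * (f x * g x))"
proof -
  have "(\<lambda>x. indicator \<Omega> x * (f x * g x)) = (\<lambda>x. (indicator \<Omega> x * f x) * (indicator \<Omega> x * g x))"
    by (auto simp: fun_eq_iff indicator_def)
  moreover have "integrable lborel (\<lambda>x. (indicator \<Omega> x * f x) * (indicator \<Omega> x * g x))"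
  proof (rule Bochner_Integration.integrable_bound)
    show "integrable lborel (\<lambda>x. (indicator \<Omega> x * f x)\<^sup>2 + (indicator \<Omega> x * g x)\<^sup>2)"
      using L2_square_integrable[OF f] L2_square_integrable[OF g] by simp
    show "(\<lambda>x. (indicator \<Omega> x * f x) * (indicator \<Omega> x * g x)) \<in> borel_measurable lborel"
      using L2_measurable[OF f] L2_measurable[OF g] by simp
  qed (simp add: abs_mult_le_sum_squares)
  ultimately show ?thesis
    by simp
qed

lemma L2_set_integrable_mult: "L2 \<Omega> f \<Longrightarrow> L2 \<Omega> g \<Longrightarrow> set_integrable lborel \<Omega> (\<lambda>x. f x * g x)"
  unfolding set_integrable_def using L2_mult_integrable by simp

lemma L2_add:
  assumes f: "L2 \<Omega> f" and g: "L2 \<Omega> g"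
  shows "L2 \<Omega> (\<lambda>x. f x + g x)"
proof (rule L2I)
  show "(\<lambda>x. indicator \<Omega> x * (f x + g x)) \<in> borel_measurable lborel"
    using L2_measurable[OF f] L2_measurable[OF g] by (simp add: distrib_left)
  have "(\<lambda>x. (indicator \<Omega> x * (f x + g x))\<^sup>2) = (\<lambda>x. (indicator \<Omega> x * f x)\<^sup>2
      + (indicator \<Omega> x * g x)\<^sup>2 + 2 * (indicator \<Omega> x * (f x * g x)))"
    by (auto simp: fun_eq_iff indicator_def power2_eq_square algebra_simps)
  then show "integrable lborel (\<lambda>x. (indicator \<Omega> x * (f x + g x))\<^sup>2)"
    using L2_square_integrable[OF f] L2_square_integrable[OF g] L2_mult_integrable[OF f g] by simp
qed

lemma L2_cmult:
  assumes f: "L2 \<Omega> f"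
  shows "L2 \<Omega> (\<lambda>x. c * f x)"
proof (rule L2I)
  show "(\<lambda>x. indicator \<Omega> x * (c * f x)) \<in> borel_measurable lborel"
    using borel_measurable_times[OF borel_measurable_const[of c] L2_measurable[OF f]]
    by (simp add: mult.left_commute)
  have "(\<lambda>x. (indicator \<Omega> x * (c * f x))\<^sup>2) = (\<lambda>x. c\<^sup>2 * (indicator \<Omega> x * f x)\<^sup>2)"
    by (simp add: fun_eq_iff power2_eq_square algebra_simps)
  then show "integrable lborel (\<lambda>x. (indicator \<Omega> x * (c * f x))\<^sup>2)"
    using L2_square_integrable[OF f] by simp
qed

lemma L2_lincomb: "L2 \<Omega> f \<Longrightarrow> L2 \<Omega> g \<Longrightarrow> L2 \<Omega> (\<lambda>x. a * f x + b * g x)"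
  by (intro L2_add L2_cmult)

lemma L2_diff: "L2 \<Omega> f \<Longrightarrow> L2 \<Omega> g \<Longrightarrow> L2 \<Omega> (\<lambda>x. f x - g x)"
  using L2_lincomb[of \<Omega> f g 1 "-1"] by simp

lemma L2_zero: "L2 \<Omega> (\<lambda>x. 0)"
  by (rule L2I) auto

lemma L2_sum: "finite I \<Longrightarrow> (\<And>i. i \<in> I \<Longrightarrow> L2 \<Omega> (f i)) \<Longrightarrow> L2 \<Omega> (\<lambda>x. \<Sum>i\<in>I. f i x)"
  by (induction I rule: finite_induct) (auto intro: L2_add L2_zero)

lemma continuous_L2:
  assumes "open \<Omega>" "bounded \<Omega>" "continuous_on UNIV f"
  shows "L2 \<Omega> f"
proof (rule L2I)
  have f: "f \<in> borel_measurable lborel"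
    using assms(3) by (simp add: borel_measurable_continuous_onI)
  then show "(\<lambda>x. indicator \<Omega> x * f x) \<in> borel_measurable lborel"
    using assms(1) by (intro borel_measurable_times borel_measurable_indicator) auto
  have "integrable lborel (\<lambda>x. indicator (closure \<Omega>) x *\<^sub>R (f x)\<^sup>2)"
    using assms by (intro borel_integrable_compact continuous_intros)
      (auto simp: compact_closure intro: continuous_on_subset)
  then have "integrable lborel (\<lambda>x. indicator (closure \<Omega>) x *\<^sub>R (f x)\<^sup>2 * indicator \<Omega> x)"
    using assms(1) by (intro integrable_real_mult_indicator) auto
  then show "integrable lborel (\<lambda>x. (indicator \<Omega> x * f x)\<^sup>2)"
    by (rule Bochner_Integration.integrable_cong[THEN iffD1, OF refl, rotated])
      (auto simp: indicator_def power2_eq_square dest: subsetD[OF closure_subset])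
qed

lemma L2_integrable:
  assumes "open \<Omega>" "bounded \<Omega>" "L2 \<Omega> f"
  shows "integrable lborel (\<lambda>x. indicator \<Omega> x * f x)"
proof (rule Bochner_Integration.integrable_bound)
  have "integrable lborel (indicator \<Omega> :: real^2 \<Rightarrow> real)"
    using assms(1,2) emeasure_bounded_finite by (intro integrable_real_indicator) auto
  then show "integrable lborel (\<lambda>x. indicator \<Omega> x + (indicator \<Omega> x * f x)\<^sup>2)"
    using L2_square_integrable[OF assms(3)] by simp
  show "(\<lambda>x. indicator \<Omega> x * f x) \<in> borel_measurable lborel"
    using L2_measurable[OF assms(3)] .
  have "\<bar>a\<bar> \<le> 1 + a\<^sup>2" for a :: real
    using sum_squares_bound[of "\<bar>a\<bar>" 1] by simp
  then show "AE x in lborel. norm (indicator \<Omega> x * f x) \<le> norm (indicator \<Omega> x + (indicator \<Omega> x * f x)\<^sup>2)"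
    by (auto simp: indicator_def)
qed

lemma ipS_linear_left:
  assumes "L2 \<Omega> f" "L2 \<Omega> g" "L2 \<Omega> h"
  shows "ipS \<Omega> (\<lambda>x. a * f x + b * g x) h = a * ipS \<Omega> f h + b * ipS \<Omega> g h"
proof -
  have "ipS \<Omega> (\<lambda>x. a * f x + b * g x) h = (LINT x:\<Omega>|lborel. a * (f x * h x) + b * (g x * h x))"
    by (simp add: ipS_def algebra_simps)
  also have "\<dots> = (LINT x:\<Omega>|lborel. a * (f x * h x)) + (LINT x:\<Omega>|lborel. b * (g x * h x))"
    using assms by (intro set_integral_add) (auto intro: L2_set_integrable_mult)
  finally show ?thesis
    by (simp add: ipS_def)
qed

lemma ipS_commute: "ipS \<Omega> f g = ipS \<Omega> g f"
  unfolding ipS_def by (simp add: mult.commute)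

lemma ipS_linear_right:
  assumes "L2 \<Omega> f" "L2 \<Omega> g" "L2 \<Omega> h"
  shows "ipS \<Omega> h (\<lambda>x. a * f x + b * g x) = a * ipS \<Omega> h f + b * ipS \<Omega> h g"
proof -
  have "ipS \<Omega> h (\<lambda>x. a * f x + b * g x) = ipS \<Omega> (\<lambda>x. a * f x + b * g x) h"
    by (rule ipS_commute)
  then show ?thesis
    using ipS_linear_left[OF assms, of a b] ipS_commute[of \<Omega> f h] ipS_commute[of \<Omega> g h] by simp
qed

lemma ipS_add_left: "L2 \<Omega> f \<Longrightarrow> L2 \<Omega> g \<Longrightarrow> L2 \<Omega> h \<Longrightarrow> ipS \<Omega> (\<lambda>x. f x + g x) h = ipS \<Omega> f h + ipS \<Omega> g h"
  using ipS_linear_left[of \<Omega> f g h 1 1] by simp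

lemma ipS_diff_left: "L2 \<Omega> f \<Longrightarrow> L2 \<Omega> g \<Longrightarrow> L2 \<Omega> h \<Longrightarrow> ipS \<Omega> (\<lambda>x. f x - g x) h = ipS \<Omega> f h - ipS \<Omega> g h"
  using ipS_linear_left[of \<Omega> f g h 1 "-1"] by simp

lemma ipS_cmult_left: "L2 \<Omega> f \<Longrightarrow> L2 \<Omega> h \<Longrightarrow> ipS \<Omega> (\<lambda>x. a * f x) h = a * ipS \<Omega> f h"
  using ipS_linear_left[of \<Omega> f f h a 0] by simp

lemma ipS_self_nonneg: "0 \<le> ipS \<Omega> f f"
  unfolding ipS_def set_lebesgue_integral_def by (rule integral_nonneg_AE) (auto simp: indicator_def)

lemma ipS_sum_left:
  "finite I \<Longrightarrow> (\<And>i. i \<in> I \<Longrightarrow> L2 \<Omega> (f i)) \<Longrightarrow> L2 \<Omega> h \<Longrightarrow>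
    ipS \<Omega> (\<lambda>x. \<Sum>i\<in>I. f i x) h = (\<Sum>i\<in>I. ipS \<Omega> (f i) h)"
proof (induction I rule: finite_induct)
  case empty
  then show ?case by (simp add: ipS_def)
next
  case (insert i I)
  then show ?case
    by (simp add: ipS_add_left L2_sum)
qed

lemma ipS_lincomb_self:
  assumes f: "L2 \<Omega> f" and h: "L2 \<Omega> h"
  shows "ipS \<Omega> (\<lambda>x. a * f x + c * h x) (\<lambda>x. a * f x + c * h x)
    = a\<^sup>2 * ipS \<Omega> f f + 2 * a * c * ipS \<Omega> f h + c\<^sup>2 * ipS \<Omega> h h"
proof -
  have "ipS \<Omega> (\<lambda>x. a * f x + c * h x) (\<lambda>x. a * f x + c * h x)
      = a * ipS \<Omega> f (\<lambda>x. a * f x + c * h x) + c * ipS \<Omega> h (\<lambda>x. a * f x + c * h x)"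
    by (rule ipS_linear_left[OF f h L2_lincomb[OF f h]])
  also have "\<dots> = a * (a * ipS \<Omega> f f + c * ipS \<Omega> f h) + c * (a * ipS \<Omega> h f + c * ipS \<Omega> h h)"
    by (simp only: ipS_linear_right[OF f h f] ipS_linear_right[OF f h h])
  finally show ?thesis
    using ipS_commute[of \<Omega> h f] by (simp add: power2_eq_square algebra_simps)
qed

lemma ipS_young:
  assumes "L2 \<Omega> f" "L2 \<Omega> h" "0 < s"
  shows "2 * \<bar>ipS \<Omega> f h\<bar> \<le> s * ipS \<Omega> f f + ipS \<Omega> h h / s"
proof -
  have "0 \<le> s\<^sup>2 * ipS \<Omega> f f + 2 * s * c * ipS \<Omega> f h + c\<^sup>2 * ipS \<Omega> h h" for c
    using ipS_self_nonneg[of \<Omega> "\<lambda>x. s * f x + c * h x"] unfolding ipS_lincomb_self[OF assms(1,2)] .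
  from this[of 1] this[of "-1"] have "2 * s * \<bar>ipS \<Omega> f h\<bar> \<le> s\<^sup>2 * ipS \<Omega> f f + ipS \<Omega> h h"
    by (cases "0 \<le> ipS \<Omega> f h") simp_all
  then show ?thesis
    using assms(3) by (simp add: field_simps power2_eq_square)
qed

lemma ipS_cong_AE:
  assumes "L2 \<Omega> f" "L2 \<Omega> f'" "L2 \<Omega> g" "L2 \<Omega> g'"
    and "AE x in lborel. x \<in> \<Omega> \<longrightarrow> f x = f' x" "AE x in lborel. x \<in> \<Omega> \<longrightarrow> g x = g' x"
  shows "ipS \<Omega> f g = ipS \<Omega> f' g'"
  unfolding ipS_def set_lebesgue_integral_def
proof (rule integral_cong_AE)
  show "(\<lambda>x. indicator \<Omega> x *\<^sub>R (f x * g x)) \<in> borel_measurable lborel"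
    "(\<lambda>x. indicator \<Omega> x *\<^sub>R (f' x * g' x)) \<in> borel_measurable lborel"
    using L2_mult_integrable assms(1-4) by auto
  show "AE x in lborel. indicator \<Omega> x *\<^sub>R (f x * g x) = indicator \<Omega> x *\<^sub>R (f' x * g' x)"
    using assms(5,6) by eventually_elim (auto simp: indicator_def)
qed

section \<open>Smooth bump functions\<close>

definition smooth_real :: "(real \<Rightarrow> real) \<Rightarrow> bool" where
  "smooth_real g \<longleftrightarrow> (\<exists>D. D 0 = g \<and> (\<forall>k x. (D k has_real_derivative D (Suc k) x) (at x)))"

lemma smooth_real_deriv:
  assumes "smooth_real g"
  obtains g' where "smooth_real g'" "\<And>x. (g has_real_derivative g' x) (at x)"
proof -
  obtain D where D: "D 0 = g" "\<And>k x. (D k has_real_derivative D (Suc k) x) (at x)"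
    using assms unfolding smooth_real_def by blast
  have "smooth_real (D 1)"
    unfolding smooth_real_def using D(2) by (intro exI[of _ "\<lambda>k. D (Suc k)"]) auto
  then show ?thesis
    using that D by auto
qed

lemma smooth_real_continuous: "smooth_real g \<Longrightarrow> continuous_on UNIV g"
  by (metis smooth_real_deriv DERIV_isCont continuous_at_imp_continuous_on)

lemma smooth_real_affine:
  assumes "smooth_real g"
  shows "smooth_real (\<lambda>t. g (m * t + c))"
proof -
  obtain D where D: "D 0 = g" "\<And>k x. (D k has_real_derivative D (Suc k) x) (at x)"
    using assms unfolding smooth_real_def by blast
  show ?thesis
    unfolding smooth_real_def
  proof (intro exI[of _ "\<lambda>k t. m ^ k * D k (m * t + c)"] conjI allI)
    fix k x
    have "((\<lambda>t. D k (m * t + c)) has_real_derivative D (Suc k) (m * x + c) * m) (at x)"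
      by (rule DERIV_chain2[OF D(2)]) (auto intro!: derivative_eq_intros)
    then show "((\<lambda>t. m ^ k * D k (m * t + c)) has_real_derivative m ^ Suc k * D (Suc k) (m * x + c)) (at x)"
      using DERIV_cmult[where c = "m ^ k"] by (fastforce simp: algebra_simps)
  qed (use D in simp)
qed

definition exp_bump :: "real \<Rightarrow> real" where
  "exp_bump t = (if 0 < t then exp (- 1 / t) else 0)"

text \<open>On \<open>t > 0\<close> the \<open>k\<close>-th derivative of \<^const>\<open>exp_bump\<close> is \<open>P\<^sub>k (1/t) exp (-1/t)\<close>,
  since \<open>(P (1/t) exp (-1/t))' = (1/t)\<^sup>2 (P - P') (1/t) exp (-1/t)\<close>.\<close>

fun exp_bump_poly :: "nat \<Rightarrow> real poly" where
  "exp_bump_poly 0 = 1"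
| "exp_bump_poly (Suc k) = [:0, 0, 1:] * (exp_bump_poly k - pderiv (exp_bump_poly k))"

definition exp_bump_deriv :: "nat \<Rightarrow> real \<Rightarrow> real" where
  "exp_bump_deriv k t = (if 0 < t then poly (exp_bump_poly k) (1 / t) * exp (- 1 / t) else 0)"

lemma poly_mult_exp_neg_tendsto_0: "((\<lambda>y. poly q y * exp (- y)) \<longlongrightarrow> 0) at_top"
  for q :: "real poly"
proof -
  have "((\<lambda>y. \<Sum>i\<le>degree q. coeff q i * (y ^ i / exp y)) \<longlongrightarrow> (\<Sum>i\<le>degree q. coeff q i * 0)) at_top"
    by (intro tendsto_sum tendsto_mult tendsto_const tendsto_power_div_exp_0)
  moreover have "(\<lambda>y. \<Sum>i\<le>degree q. coeff q i * (y ^ i / exp y)) = (\<lambda>y. poly q y * exp (- y))"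
    by (simp add: fun_eq_iff poly_altdef sum_distrib_right exp_minus divide_inverse mult.assoc)
  ultimately show ?thesis by simp
qed

lemma exp_bump_deriv_has_deriv_0: "(exp_bump_deriv k has_real_derivative 0) (at 0)"
proof -
  have "((\<lambda>y. (exp_bump_deriv k y - exp_bump_deriv k 0) / (y - 0)) \<longlongrightarrow> 0) (at 0)"
  proof (rule filterlim_split_at)
    show "((\<lambda>y. (exp_bump_deriv k y - exp_bump_deriv k 0) / (y - 0)) \<longlongrightarrow> 0) (at_left 0)"
      by (rule tendsto_eventually)
        (auto simp: exp_bump_deriv_def eventually_at_left_field intro: exI[of _ "-1"])
    have "((\<lambda>y. poly ([:0, 1:] * exp_bump_poly k) y * exp (- y)) \<longlongrightarrow> 0) at_top"
      by (rule poly_mult_exp_neg_tendsto_0)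
    then have "((\<lambda>y. (exp_bump_deriv k (inverse y) - exp_bump_deriv k 0) / (inverse y - 0)) \<longlongrightarrow> 0) at_top"
    proof (rule Lim_transform_eventually)
      show "\<forall>\<^sub>F y in at_top. poly ([:0, 1:] * exp_bump_poly k) y * exp (- y)
          = (exp_bump_deriv k (inverse y) - exp_bump_deriv k 0) / (inverse y - 0)"
        using eventually_gt_at_top[of 0] by eventually_elim (auto simp: exp_bump_deriv_def field_simps)
    qed
    then show "((\<lambda>y. (exp_bump_deriv k y - exp_bump_deriv k 0) / (y - 0)) \<longlongrightarrow> 0) (at_right 0)"
      unfolding filterlim_at_right_to_top .
  qed
  then show ?thesis
    unfolding has_field_derivative_iff .
qed

lemma exp_bump_deriv_has_deriv: "(exp_bump_deriv k has_real_derivative exp_bump_deriv (Suc k) x) (at x)"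
proof -
  consider "0 < x" | "x < 0" | "x = 0" by linarith
  then show ?thesis
  proof cases
    case 1
    let ?p = "exp_bump_poly k"
    have "((\<lambda>t. poly ?p (1 / t) * exp (- 1 / t)) has_real_derivative
        poly (pderiv ?p) (1 / x) * (- 1 / x\<^sup>2) * exp (- 1 / x) + poly ?p (1 / x) * (exp (- 1 / x) * (1 / x\<^sup>2))) (at x)"
      using 1 by (auto intro!: derivative_eq_intros DERIV_chain2[OF poly_DERIV]
          simp: power2_eq_square field_simps)
    also have "poly (pderiv ?p) (1 / x) * (- 1 / x\<^sup>2) * exp (- 1 / x) + poly ?p (1 / x) * (exp (- 1 / x) * (1 / x\<^sup>2))
        = exp_bump_deriv (Suc k) x"
      using 1 by (simp add: exp_bump_deriv_def power2_eq_square field_simps)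
    finally show ?thesis
      by (rule has_field_derivative_transform_within_open[of _ _ _ "{0<..}"])
        (use 1 in \<open>auto simp: exp_bump_deriv_def\<close>)
  next
    case 2
    have "((\<lambda>t. 0) has_real_derivative 0) (at x)" by simp
    then have "(exp_bump_deriv k has_real_derivative 0) (at x)"
      by (rule has_field_derivative_transform_within_open[of _ _ _ "{..<0}"])
        (use 2 in \<open>auto simp: exp_bump_deriv_def\<close>)
    then show ?thesis
      using 2 by (simp add: exp_bump_deriv_def)
  next
    case 3
    then show ?thesis
      using exp_bump_deriv_has_deriv_0 by (simp add: exp_bump_deriv_def)
  qed
qed

lemma smooth_real_exp_bump: "smooth_real exp_bump"
  unfolding smooth_real_def
  by (intro exI[of _ exp_bump_deriv] conjI allI exp_bump_deriv_has_deriv)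
    (auto simp: fun_eq_iff exp_bump_deriv_def exp_bump_def)

lemma exp_bump_nonneg: "0 \<le> exp_bump t"
  by (simp add: exp_bump_def)

lemma exp_bump_le_1: "exp_bump t \<le> 1"
  by (simp add: exp_bump_def)

lemma exp_bump_eq_0_iff: "exp_bump t = 0 \<longleftrightarrow> t \<le> 0"
  by (simp add: exp_bump_def)

lemma exp_bump_tendsto_1:
  assumes "0 < t"
  shows "((\<lambda>m. exp_bump (real (Suc m) * t)) \<longlongrightarrow> 1) sequentially"
proof -
  have "((\<lambda>m. exp (- (1 / t) * inverse (real (Suc m)))) \<longlongrightarrow> exp (- (1 / t) * 0)) sequentially"
    by (intro tendsto_intros LIMSEQ_inverse_real_of_nat)
  moreover have "exp_bump (real (Suc m) * t) = exp (- (1 / t) * inverse (real (Suc m)))" for m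
    using assms by (simp add: exp_bump_def field_simps add_pos_nonneg)
  ultimately show ?thesis by simp
qed

inductive coord_smooth :: "(real^2 \<Rightarrow> real) \<Rightarrow> bool" where
  coord: "smooth_real g \<Longrightarrow> coord_smooth (\<lambda>x. g (x $ j))"
| const: "coord_smooth (\<lambda>x. c)"
| add: "coord_smooth f \<Longrightarrow> coord_smooth g \<Longrightarrow> coord_smooth (\<lambda>x. f x + g x)"
| mult: "coord_smooth f \<Longrightarrow> coord_smooth g \<Longrightarrow> coord_smooth (\<lambda>x. f x * g x)"

lemma coord_smooth_continuous: "coord_smooth f \<Longrightarrow> continuous_on UNIV f"
proof (induction rule: coord_smooth.induct)
  case (coord g j)
  have "continuous_on UNIV (g \<circ> (\<lambda>x::real^2. x $ j))"
    using smooth_real_continuous[OF coord] by (intro continuous_on_compose continuous_intros)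
      (auto intro: continuous_on_subset)
  then show ?case by (simp add: o_def)
qed (auto intro: continuous_intros)

lemma smooth_real_coord_axis_deriv:
  assumes "smooth_real g"
  shows "\<exists>f'. coord_smooth f' \<and> (\<forall>x. ((\<lambda>t. g ((x + t *\<^sub>R axis i 1) $ j)) has_real_derivative f' x) (at 0))"
proof -
  obtain g' where g': "smooth_real g'" "\<And>x. (g has_real_derivative g' x) (at x)"
    using smooth_real_deriv[OF assms] by blast
  show ?thesis
  proof (cases "j = i")
    case True
    have "((\<lambda>t. g (x $ j + t)) has_real_derivative g' (x $ j)) (at 0)" for x
    proof -
      have "((\<lambda>t. x $ j + t) has_real_derivative 1) (at 0)"
        by (auto intro!: derivative_eq_intros)
      then show ?thesis
        using DERIV_chain2[OF g'(2)] by fastforce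
    qed
    then show ?thesis
      using True g'(1) by (intro exI[of _ "\<lambda>x. g' (x $ j)"]) (auto simp: axis_def intro: coord_smooth.coord)
  next
    case False
    then show ?thesis
      by (intro exI[of _ "\<lambda>x. 0"]) (auto simp: axis_def intro: coord_smooth.const)
  qed
qed

lemma coord_smooth_axis_deriv:
  assumes "coord_smooth f"
  shows "\<exists>f'. coord_smooth f' \<and> (\<forall>x. ((\<lambda>t. f (x + t *\<^sub>R axis i 1)) has_real_derivative f' x) (at 0))"
  using assms
proof (induction rule: coord_smooth.induct)
  case (coord g j)
  then show ?case
    by (rule smooth_real_coord_axis_deriv)
next
  case (const c)
  then show ?case
    by (intro exI[of _ "\<lambda>x. 0"]) (auto intro: coord_smooth.const)
next
  case (add f g)
  then obtain f' g' where "coord_smooth f'" "coord_smooth g'"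
    "\<And>x. ((\<lambda>t. f (x + t *\<^sub>R axis i 1)) has_real_derivative f' x) (at 0)"
    "\<And>x. ((\<lambda>t. g (x + t *\<^sub>R axis i 1)) has_real_derivative g' x) (at 0)"
    by blast
  then show ?case
    by (intro exI[of _ "\<lambda>x. f' x + g' x"]) (auto intro: coord_smooth.add DERIV_add)
next
  case (mult f g)
  then obtain f' g' where f': "coord_smooth f'" "\<And>x. ((\<lambda>t. f (x + t *\<^sub>R axis i 1)) has_real_derivative f' x) (at 0)"
    and g': "coord_smooth g'" "\<And>x. ((\<lambda>t. g (x + t *\<^sub>R axis i 1)) has_real_derivative g' x) (at 0)"
    by blast
  have "((\<lambda>t. f (x + t *\<^sub>R axis i 1) * g (x + t *\<^sub>R axis i 1)) has_real_derivative f' x * g x + f x * g' x) (at 0)" for x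
    using DERIV_mult[OF f'(2) g'(2)] by (simp add: mult.commute)
  then show ?case
    using f' g' mult.hyps
    by (intro exI[of _ "\<lambda>x. f' x * g x + f x * g' x"]) (auto intro: coord_smooth.add coord_smooth.mult)
qed

lemma coord_smooth_Ck: "coord_smooth f \<Longrightarrow> Ck k f"
proof (induction k arbitrary: f)
  case 0
  then show ?case by (simp add: coord_smooth_continuous)
next
  case (Suc k)
  have "Ck k (pd i f)" for i
  proof -
    obtain f' where f': "coord_smooth f'" "\<And>x. ((\<lambda>t. f (x + t *\<^sub>R axis i 1)) has_real_derivative f' x) (at 0)"
      using coord_smooth_axis_deriv[OF Suc.prems, of i] by blast
    then have "pd i f = f'"
      by (auto simp: fun_eq_iff pd_def DERIV_imp_deriv)
    then show ?thesis
      using Suc.IH f'(1) by simp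
  qed
  moreover have "(\<lambda>t. f (x + t *\<^sub>R axis i 1)) differentiable (at 0)" for i x
    using coord_smooth_axis_deriv[OF Suc.prems, of i] real_differentiable_def by blast
  ultimately show ?case
    using coord_smooth_continuous[OF Suc.prems] by simp
qed

lemma coord_smooth_C_inf: "coord_smooth f \<Longrightarrow> C_inf f"
  unfolding C_inf_def using coord_smooth_Ck by blast

definition box_bump :: "real \<Rightarrow> real^2 \<Rightarrow> real^2 \<Rightarrow> real^2 \<Rightarrow> real" where
  "box_bump m a b x = exp_bump (m * (x$1 - a$1)) * exp_bump (m * (b$1 - x$1))
    * exp_bump (m * (x$2 - a$2)) * exp_bump (m * (b$2 - x$2))"

lemma coord_smooth_box_bump: "coord_smooth (box_bump m a b)"
proof -
  have "smooth_real (\<lambda>t. exp_bump (m' * t + c))" for m' c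
    by (rule smooth_real_affine[OF smooth_real_exp_bump])
  then have "coord_smooth (\<lambda>x. exp_bump (m * x$1 + - m * a$1) * exp_bump (- m * x$1 + m * b$1)
      * exp_bump (m * x$2 + - m * a$2) * exp_bump (- m * x$2 + m * b$2))"
    by (intro coord_smooth.mult coord_smooth.coord[of "\<lambda>t. exp_bump (_ * t + _)", unfolded])
  moreover have "(\<lambda>x. exp_bump (m * x$1 + - m * a$1) * exp_bump (- m * x$1 + m * b$1)
      * exp_bump (m * x$2 + - m * a$2) * exp_bump (- m * x$2 + m * b$2)) = box_bump m a b"
    by (auto simp: fun_eq_iff box_bump_def algebra_simps)
  ultimately show ?thesis by simp
qed

lemma box_bump_nonzero:
  assumes "0 < m"
  shows "{x. box_bump m a b x \<noteq> 0} = box a b"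
proof -
  have "box_bump m a b x \<noteq> 0 \<longleftrightarrow> x \<in> box a b" for x
  proof -
    have "box_bump m a b x \<noteq> 0 \<longleftrightarrow>
        0 < m * (x$1 - a$1) \<and> 0 < m * (b$1 - x$1) \<and> 0 < m * (x$2 - a$2) \<and> 0 < m * (b$2 - x$2)"
      by (simp add: box_bump_def exp_bump_eq_0_iff not_le)
    also have "\<dots> \<longleftrightarrow> x \<in> box a b"
      using assms by (simp add: mem_box_cart forall_2 zero_less_mult_iff)
    finally show ?thesis .
  qed
  then show ?thesis by auto
qed

lemma box_bump_bounds: "0 \<le> box_bump m a b x" "box_bump m a b x \<le> 1"
  unfolding box_bump_def using exp_bump_nonneg exp_bump_le_1
  by (auto intro!: mult_le_one mult_nonneg_nonneg)

lemma box_bump_test_fun: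
  assumes "0 < m" "cbox a b \<subseteq> \<Omega>"
  shows "test_fun \<Omega> (box_bump m a b)"
proof -
  have "closure {x. box_bump m a b x \<noteq> 0} \<subseteq> cbox a b"
    unfolding box_bump_nonzero[OF assms(1)] by (metis box_subset_cbox closed_cbox closure_minimal)
  moreover from this have "compact (closure {x. box_bump m a b x \<noteq> 0})"
    by (meson bounded_cbox bounded_subset closure_subset compact_closure)
  ultimately show ?thesis
    unfolding test_fun_def using assms(2) coord_smooth_C_inf[OF coord_smooth_box_bump] by auto
qed

lemma box_bump_tendsto_indicator:
  "((\<lambda>n. box_bump (real (Suc n)) a b x) \<longlongrightarrow> indicator (box a b) x) sequentially"
proof (cases "x \<in> box a b")
  case True
  then have "0 < x$1 - a$1" "0 < b$1 - x$1" "0 < x$2 - a$2" "0 < b$2 - x$2"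
    by (auto simp: mem_box_cart forall_2)
  then have "((\<lambda>n. box_bump (real (Suc n)) a b x) \<longlongrightarrow> 1 * 1 * 1 * 1) sequentially"
    unfolding box_bump_def by (intro tendsto_mult exp_bump_tendsto_1)
  then show ?thesis
    using True by simp
next
  case False
  then have "box_bump (real (Suc n)) a b x = 0" for n
    using box_bump_nonzero[of "real (Suc n)" a b] by auto
  then show ?thesis
    using False by simp
qed

section \<open>Integration by parts for test functions\<close>

lemma test_fun_Ck: "test_fun \<Omega> \<phi> \<Longrightarrow> Ck k \<phi>"
  unfolding test_fun_def C_inf_def by blast

lemma test_fun_continuous: "test_fun \<Omega> \<phi> \<Longrightarrow> continuous_on UNIV \<phi>"
  using test_fun_Ck[of \<Omega> \<phi> 0] by simp

lemma test_fun_pd_continuous: "test_fun \<Omega> \<phi> \<Longrightarrow> continuous_on UNIV (pd i \<phi>)"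
  using test_fun_Ck[of \<Omega> \<phi> 1] by simp

lemma test_fun_axis_deriv:
  "test_fun \<Omega> \<phi> \<Longrightarrow> ((\<lambda>t. \<phi> (x + t *\<^sub>R axis i 1)) has_real_derivative pd i \<phi> x) (at 0)"
  using test_fun_Ck[of \<Omega> \<phi> 1] unfolding pd_def by (simp add: DERIV_deriv_iff_real_differentiable)

lemma test_fun_vanishes:
  assumes "test_fun \<Omega> \<phi>" "x \<notin> \<Omega>"
  shows "\<phi> x = 0"
proof (rule ccontr)
  assume "\<phi> x \<noteq> 0"
  then have "x \<in> closure {x. \<phi> x \<noteq> 0}"
    by (intro subsetD[OF closure_subset]) simp
  then show False
    using assms unfolding test_fun_def by auto
qed

lemma test_fun_bounded_support:
  assumes "test_fun \<Omega> \<phi>"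
  obtains R where "\<And>x. R < norm x \<Longrightarrow> \<phi> x = 0"
proof -
  have "bounded (closure {x. \<phi> x \<noteq> 0})"
    using assms compact_imp_bounded unfolding test_fun_def by blast
  then obtain R where R: "\<forall>x \<in> closure {x. \<phi> x \<noteq> 0}. norm x \<le> R"
    using bounded_iff by blast
  have "\<phi> x = 0" if "R < norm x" for x
  proof (rule ccontr)
    assume "\<phi> x \<noteq> 0"
    then have "x \<in> closure {x. \<phi> x \<noteq> 0}"
      by (intro subsetD[OF closure_subset]) simp
    then show False
      using R that by fastforce
  qed
  then show ?thesis
    using that by blast
qed

lemma test_fun_L2: "open \<Omega> \<Longrightarrow> bounded \<Omega> \<Longrightarrow> test_fun \<Omega> \<phi> \<Longrightarrow> L2 \<Omega> \<phi>"
  using continuous_L2 test_fun_continuous by blast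

lemma test_fun_pd_L2: "open \<Omega> \<Longrightarrow> bounded \<Omega> \<Longrightarrow> test_fun \<Omega> \<phi> \<Longrightarrow> L2 \<Omega> (pd i \<phi>)"
  using continuous_L2 test_fun_pd_continuous by blast

lemma lborel_integral_translate:
  fixes h :: "'a::euclidean_space \<Rightarrow> real"
  assumes "integrable lborel h"
  shows "integrable lborel (\<lambda>x. h (x + c))" and "integral\<^sup>L lborel (\<lambda>x. h (x + c)) = integral\<^sup>L lborel h"
proof -
  have h: "h \<in> borel_measurable borel"
    using assms by simp
  have "integrable (distr lborel borel ((+) c)) h"
    using assms by (simp add: lborel_distr_plus)
  then show "integrable lborel (\<lambda>x. h (x + c))"
    using h by (subst (asm) integrable_distr_eq) (auto simp: add.commute)
  have "integral\<^sup>L lborel h = integral\<^sup>L (distr lborel borel ((+) c)) h"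
    by (simp add: lborel_distr_plus)
  also have "\<dots> = integral\<^sup>L lborel (\<lambda>x. h (x + c))"
    using h by (subst integral_distr) (auto simp: add.commute)
  finally show "integral\<^sup>L lborel (\<lambda>x. h (x + c)) = integral\<^sup>L lborel h" ..
qed

lemma axis_difference_quotient_bound:
  fixes h h' :: "real^2 \<Rightarrow> real"
  assumes deriv: "\<And>x. ((\<lambda>t. h (x + t *\<^sub>R axis i 1)) has_real_derivative h' x) (at 0)"
    and supp: "\<And>x. R < norm x \<Longrightarrow> h x = 0"
    and bound: "\<And>y. y \<in> cball 0 (R + 2) \<Longrightarrow> \<bar>h' y\<bar> \<le> M"
    and t: "0 < t" "t \<le> 1"
  shows "\<bar>(h (x + t *\<^sub>R axis i 1) - h x) / t\<bar> \<le> M * indicator (cball 0 (R + 1)) x"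
proof (cases "norm x \<le> R + 1")
  case True
  define e :: "real^2" where "e = axis i 1"
  have "((\<lambda>s. h (x + s *\<^sub>R e)) has_real_derivative h' (x + z *\<^sub>R e)) (at z)" for z
  proof -
    have "((\<lambda>s. h ((x + z *\<^sub>R e) + s *\<^sub>R e)) has_real_derivative h' (x + z *\<^sub>R e)) (at 0)"
      using deriv unfolding e_def by blast
    then have "((\<lambda>s. h (x + (s + z) *\<^sub>R e)) has_real_derivative h' (x + z *\<^sub>R e)) (at 0)"
      by (simp add: algebra_simps)
    then show ?thesis
      using DERIV_shift[of "\<lambda>s. h (x + s *\<^sub>R e)" _ 0 z] by simp
  qed
  then have "\<exists>z. 0 < z \<and> z < t \<and> h (x + t *\<^sub>R e) - h (x + 0 *\<^sub>R e) = (t - 0) * h' (x + z *\<^sub>R e)"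
    using t by (intro MVT2) auto
  then obtain z where z: "0 < z" "z < t" "h (x + t *\<^sub>R e) - h x = t * h' (x + z *\<^sub>R e)"
    by auto
  have "norm (x + z *\<^sub>R e) \<le> norm x + z"
    using norm_triangle_ineq[of x "z *\<^sub>R e"] z by (simp add: e_def norm_axis_1)
  then have "\<bar>h' (x + z *\<^sub>R e)\<bar> \<le> M"
    using True z t by (intro bound) simp
  then show ?thesis
    using True z t by (simp add: e_def)
next
  case False
  have "norm x - t \<le> norm (x + t *\<^sub>R axis i 1)"
    using norm_triangle_ineq2[of x "- t *\<^sub>R axis i 1"] t by (simp add: norm_axis_1)
  then have "h (x + t *\<^sub>R axis i 1) = 0" "h x = 0"
    using False t by (auto intro: supp)
  then show ?thesis
    using False by simp
qed

lemma axis_difference_quotient_tendsto: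
  fixes h :: "real^2 \<Rightarrow> real"
  assumes "((\<lambda>t. h (x + t *\<^sub>R axis i 1)) has_real_derivative h' x) (at 0)"
    and "t \<longlonglongrightarrow> 0" "\<And>n. t n \<noteq> 0"
  shows "(\<lambda>n. (h (x + t n *\<^sub>R axis i 1) - h x) / t n) \<longlonglongrightarrow> h' x"
proof -
  have "((\<lambda>y. (h (x + y *\<^sub>R axis i 1) - h x) / y) \<longlongrightarrow> h' x) (at 0)"
    using assms(1) unfolding has_field_derivative_iff by simp
  then have "((\<lambda>y. (h (x + y *\<^sub>R axis i 1) - h x) / y) \<circ> t) \<longlonglongrightarrow> h' x"
    using assms(2,3) unfolding tendsto_at_iff_sequentially by blast
  then show ?thesis
    by (simp add: o_def)
qed

text \<open>The difference quotients along the \<open>i\<close>-th axis have integral zero by translation invariance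
  and converge to \<open>h'\<close> under a common integrable bound.\<close>

lemma integral_axis_deriv_eq_0:
  fixes h h' :: "real^2 \<Rightarrow> real"
  assumes ch: "continuous_on UNIV h" and ch': "continuous_on UNIV h'"
    and deriv: "\<And>x. ((\<lambda>t. h (x + t *\<^sub>R axis i 1)) has_real_derivative h' x) (at 0)"
    and supp: "\<And>x. R < norm x \<Longrightarrow> h x = 0"
  shows "integral\<^sup>L lborel h' = 0"
proof -
  obtain M where M: "\<And>y. y \<in> cball 0 (R + 2) \<Longrightarrow> norm (h' y) \<le> M"
    using continuous_on_compact_bound[OF compact_cball continuous_on_subset[OF ch' subset_UNIV]] by blast
  have "integrable lborel (\<lambda>x. indicator (cball 0 R) x *\<^sub>R h x)"
    using ch by (intro borel_integrable_compact) (auto intro: continuous_on_subset)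
  moreover have "(\<lambda>x. indicator (cball 0 R) x *\<^sub>R h x) = h"
    using supp by (auto simp: fun_eq_iff indicator_def not_le)
  ultimately have h_int: "integrable lborel h" by simp
  define t :: "nat \<Rightarrow> real" where "t n = 1 / real (Suc n)" for n
  have t: "0 < t n" "t n \<le> 1" for n
    by (auto simp: t_def)
  define s where "s n x = (h (x + t n *\<^sub>R axis i 1) - h x) / t n" for n x
  have "(\<lambda>n. integral\<^sup>L lborel (s n)) \<longlonglongrightarrow> integral\<^sup>L lborel h'"
  proof (rule integral_dominated_convergence[where w = "\<lambda>x. M * indicator (cball 0 (R + 1)) x"])
    show "h' \<in> borel_measurable lborel"
      using ch' by (simp add: borel_measurable_continuous_onI)
    have "integrable lborel (\<lambda>x. (h (x + t n *\<^sub>R axis i 1) - h x) / t n)" for n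
      using lborel_integral_translate(1)[OF h_int] h_int by simp
    then show "s n \<in> borel_measurable lborel" for n
      unfolding s_def by (rule borel_measurable_integrable)
    show "integrable lborel (\<lambda>x. M * indicator (cball (0::real^2) (R + 1)) x)"
      by (intro integrable_mult_right integrable_real_indicator emeasure_bounded_finite) auto
    have "t \<longlonglongrightarrow> 0"
      unfolding t_def using LIMSEQ_inverse_real_of_nat by (simp add: inverse_eq_divide)
    then show "AE x in lborel. (\<lambda>n. s n x) \<longlonglongrightarrow> h' x"
      unfolding s_def using t
      by (intro AE_I2 axis_difference_quotient_tendsto deriv) (auto simp: less_imp_neq[symmetric])
    show "AE x in lborel. norm (s n x) \<le> M * indicator (cball 0 (R + 1)) x" for n
      unfolding s_def using axis_difference_quotient_bound[OF deriv supp _ t] M by simp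
  qed
  moreover have "integral\<^sup>L lborel (s n) = 0" for n
  proof -
    have "integral\<^sup>L lborel (s n)
        = (integral\<^sup>L lborel (\<lambda>x. h (x + t n *\<^sub>R axis i 1)) - integral\<^sup>L lborel h) / t n"
      unfolding s_def using h_int lborel_integral_translate(1)[OF h_int]
      by (simp add: Bochner_Integration.integral_diff)
    then show ?thesis
      using lborel_integral_translate(2)[OF h_int] by simp
  qed
  ultimately show ?thesis
    using LIMSEQ_unique[OF _ tendsto_const] by simp
qed

lemma test_fun_integration_by_parts:
  assumes "open \<Omega>" "bounded \<Omega>" and \<phi>: "test_fun \<Omega> \<phi>" and \<psi>: "test_fun \<Omega> \<psi>"
  shows "(LINT x:\<Omega>|lborel. \<phi> x * pd i \<psi> x) = - (LINT x:\<Omega>|lborel. pd i \<phi> x * \<psi> x)"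
proof -
  define h' where "h' x = pd i \<phi> x * \<psi> x + \<phi> x * pd i \<psi> x" for x
  obtain R where R: "\<And>x. R < norm x \<Longrightarrow> \<phi> x = 0"
    using test_fun_bounded_support[OF \<phi>] by blast
  have "((\<lambda>t. \<phi> (x + t *\<^sub>R axis i 1) * \<psi> (x + t *\<^sub>R axis i 1)) has_real_derivative h' x) (at 0)" for x
    using DERIV_mult[OF test_fun_axis_deriv[OF \<phi>] test_fun_axis_deriv[OF \<psi>]]
    by (simp add: h'_def mult.commute)
  moreover have "continuous_on UNIV (\<lambda>x. \<phi> x * \<psi> x)" "continuous_on UNIV h'"
    using test_fun_continuous[OF \<phi>] test_fun_continuous[OF \<psi>]
      test_fun_pd_continuous[OF \<phi>] test_fun_pd_continuous[OF \<psi>]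
    by (auto simp: h'_def intro!: continuous_intros)
  ultimately have "integral\<^sup>L lborel h' = 0"
    using R by (intro integral_axis_deriv_eq_0[where h = "\<lambda>x. \<phi> x * \<psi> x" and R = R]) auto
  moreover have "(LINT x:\<Omega>|lborel. \<phi> x * pd i \<psi> x) + (LINT x:\<Omega>|lborel. pd i \<phi> x * \<psi> x)
      = (LINT x:\<Omega>|lborel. \<phi> x * pd i \<psi> x + pd i \<phi> x * \<psi> x)"
    using assms by (intro set_integral_add(2)[symmetric] L2_set_integrable_mult test_fun_L2 test_fun_pd_L2)
  moreover have "\<dots> = integral\<^sup>L lborel h'"
    unfolding set_lebesgue_integral_def
    by (rule Bochner_Integration.integral_cong)
      (auto simp: indicator_def h'_def test_fun_vanishes[OF \<phi>] test_fun_vanishes[OF \<psi>])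
  ultimately show ?thesis by simp
qed

lemma weak_pd_test_fun: "open \<Omega> \<Longrightarrow> bounded \<Omega> \<Longrightarrow> test_fun \<Omega> \<phi> \<Longrightarrow> weak_pd \<Omega> i \<phi> (pd i \<phi>)"
  unfolding weak_pd_def using test_fun_integration_by_parts by blast

section \<open>The fundamental lemma of the calculus of variations\<close>

lemma integrable_max_0_mult_indicator:
  fixes g :: "'a::euclidean_space \<Rightarrow> real"
  assumes "integrable lborel g" "A \<in> sets lborel"
  shows "integrable lborel (\<lambda>x. max 0 (g x) * indicator A x)"
  by (rule Bochner_Integration.integrable_bound[OF integrable_norm[OF assms(1)]])
    (use assms in \<open>auto simp: indicator_def\<close>)

lemma emeasure_density_max_0:
  fixes g :: "'a::euclidean_space \<Rightarrow> real"
  assumes "integrable lborel g" "A \<in> sets lborel"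
  shows "emeasure (density lborel (\<lambda>x. ennreal (max 0 (g x)))) A
    = ennreal (integral\<^sup>L lborel (\<lambda>x. max 0 (g x) * indicator A x))"
proof -
  have "emeasure (density lborel (\<lambda>x. ennreal (max 0 (g x)))) A
      = (\<integral>\<^sup>+x. ennreal (max 0 (g x)) * indicator A x \<partial>lborel)"
    using assms by (simp add: emeasure_density)
  also have "\<dots> = (\<integral>\<^sup>+x. ennreal (max 0 (g x) * indicator A x) \<partial>lborel)"
    by (intro nn_integral_cong) (auto simp: indicator_def)
  also have "\<dots> = ennreal (integral\<^sup>L lborel (\<lambda>x. max 0 (g x) * indicator A x))"
    using integrable_max_0_mult_indicator[OF assms] by (intro nn_integral_eq_integral) auto
  finally show ?thesis .
qed

lemma density_max_0_eq_on_box: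
  fixes h :: "'a::euclidean_space \<Rightarrow> real"
  assumes h: "integrable lborel h" and box: "integral\<^sup>L lborel (\<lambda>x. indicator (box c d) x * h x) = 0"
  shows "emeasure (density lborel (\<lambda>x. ennreal (max 0 (h x)))) (box c d)
    = emeasure (density lborel (\<lambda>x. ennreal (max 0 (- h x)))) (box c d)"
proof -
  have mh: "integrable lborel (\<lambda>x. - h x)"
    using h by simp
  have "integral\<^sup>L lborel (\<lambda>x. max 0 (h x) * indicator (box c d) x)
      - integral\<^sup>L lborel (\<lambda>x. max 0 (- h x) * indicator (box c d) x)
      = integral\<^sup>L lborel (\<lambda>x. max 0 (h x) * indicator (box c d) x - max 0 (- h x) * indicator (box c d) x)"
    by (rule Bochner_Integration.integral_diff[symmetric])
      (simp_all add: integrable_max_0_mult_indicator[OF h] integrable_max_0_mult_indicator[OF mh])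
  also have "\<dots> = integral\<^sup>L lborel (\<lambda>x. indicator (box c d) x * h x)"
    by (rule Bochner_Integration.integral_cong) (auto simp: indicator_def)
  finally show ?thesis
    using box emeasure_density_max_0[OF h] emeasure_density_max_0[OF mh] by simp
qed

text \<open>The densities of the positive and negative parts of \<open>h\<close> agree on the \<open>\<inter>\<close>-stable generator
  of open boxes, hence everywhere.\<close>

lemma AE_zero_if_box_integrals_zero:
  fixes h :: "'a::euclidean_space \<Rightarrow> real"
  assumes h: "integrable lborel h"
    and boxes: "\<And>c d. integral\<^sup>L lborel (\<lambda>x. indicator (box c d) x * h x) = 0"
  shows "AE x in lborel. h x = 0"
proof -
  let ?pos = "density lborel (\<lambda>x. ennreal (max 0 (h x)))"
  let ?neg = "density lborel (\<lambda>x. ennreal (max 0 (- h x)))"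
  have [measurable]: "h \<in> borel_measurable borel"
    using h by simp
  have eq_on_boxes: "emeasure ?pos (box c d) = emeasure ?neg (box c d)" for c d :: 'a
    using h boxes by (rule density_max_0_eq_on_box)
  have "?pos = ?neg"
  proof (rule measure_eqI_generator_eq[where E = "range (\<lambda>(a, b). box a b)" and \<Omega> = UNIV
        and A = "\<lambda>n::nat. box (- (real n *\<^sub>R One)) (real n *\<^sub>R One)"])
    show "Int_stable (range (\<lambda>(a, b). box a b :: 'a set))"
      by (auto simp: Int_stable_def box_Int_box)
    show "sets ?pos = sigma_sets UNIV (range (\<lambda>(a, b). box a b))"
      "sets ?neg = sigma_sets UNIV (range (\<lambda>(a, b). box a b))"
      by (simp_all add: borel_eq_box)
    show "(\<Union>n::nat. box (- (real n *\<^sub>R One)) (real n *\<^sub>R One)) = (UNIV :: 'a set)"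
      by (rule UN_box_eq_UNIV)
    show "emeasure ?pos (box (- (real n *\<^sub>R One)) (real n *\<^sub>R One)) \<noteq> \<infinity>" for n
      using emeasure_density_max_0[OF h] by simp
  qed (auto simp: eq_on_boxes)
  moreover have "(\<lambda>x. ennreal (max 0 (h x))) \<in> borel_measurable lborel"
    "(\<lambda>x. ennreal (max 0 (- h x))) \<in> borel_measurable lborel"
    by measurable
  ultimately have "AE x in lborel. ennreal (max 0 (h x)) = ennreal (max 0 (- h x))"
    by (intro sigma_finite_measure.density_unique[OF sigma_finite_lborel])
  then show ?thesis
    by eventually_elim (simp add: ennreal_inj max_def split: if_splits)
qed

lemma box_integral_zero_if_orthogonal_to_test_funs:
  assumes "open \<Omega>" "bounded \<Omega>" and D: "L2 \<Omega> D"
    and orth: "\<And>\<phi>. test_fun \<Omega> \<phi> \<Longrightarrow> (LINT x:\<Omega>|lborel. D x * \<phi> x) = 0"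
    and sub: "cbox a b \<subseteq> \<Omega>"
  shows "integral\<^sup>L lborel (\<lambda>x. indicator (box a b) x * D x) = 0"
proof -
  define s where "s n = (\<lambda>x. indicator \<Omega> x * D x * box_bump (real (Suc n)) a b x)" for n
  have DI: "integrable lborel (\<lambda>x. indicator \<Omega> x * D x)"
    using L2_integrable[OF assms(1-3)] .
  have "(\<lambda>n. integral\<^sup>L lborel (s n)) \<longlonglongrightarrow> integral\<^sup>L lborel (\<lambda>x. indicator \<Omega> x * D x * indicator (box a b) x)"
  proof (rule integral_dominated_convergence[where w = "\<lambda>x. norm (indicator \<Omega> x * D x)"])
    show "(\<lambda>x. indicator \<Omega> x * D x * indicator (box a b) x) \<in> borel_measurable lborel"
      using L2_measurable[OF D] by simp
    have "box_bump m a b \<in> borel_measurable lborel" for m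
      using coord_smooth_continuous[OF coord_smooth_box_bump] by (simp add: borel_measurable_continuous_onI)
    then show "s n \<in> borel_measurable lborel" for n
      unfolding s_def using borel_measurable_times[OF L2_measurable[OF D]] by blast
    show "integrable lborel (\<lambda>x. norm (indicator \<Omega> x * D x))"
      using DI by simp
    show "AE x in lborel. (\<lambda>n. s n x) \<longlonglongrightarrow> indicator \<Omega> x * D x * indicator (box a b) x"
      unfolding s_def by (intro AE_I2 tendsto_mult tendsto_const box_bump_tendsto_indicator)
    show "AE x in lborel. norm (s n x) \<le> norm (indicator \<Omega> x * D x)" for n
      using box_bump_bounds[of "real (Suc n)" a b]
      by (intro AE_I2) (simp add: s_def abs_mult mult_left_le)
  qed
  moreover have "integral\<^sup>L lborel (s n) = 0" for n
    using orth[OF box_bump_test_fun[OF _ sub]]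
    by (simp add: s_def set_lebesgue_integral_def mult.assoc)
  ultimately have "integral\<^sup>L lborel (\<lambda>x. indicator \<Omega> x * D x * indicator (box a b) x) = 0"
    using LIMSEQ_unique[OF _ tendsto_const] by simp
  moreover have "(\<lambda>x. indicator \<Omega> x * D x * indicator (box a b) x) = (\<lambda>x. indicator (box a b) x * D x)"
    using sub box_subset_cbox by (auto simp: fun_eq_iff indicator_def)
  ultimately show ?thesis by simp
qed

lemma AE_not_in_cbox_minus_box: "AE x in lborel. x \<notin> cbox a b - box a (b::'a::euclidean_space)"
proof (rule AE_not_in)
  have "emeasure lborel (cbox a b - box a b) = emeasure lborel (cbox a b) - emeasure lborel (box a b)"
    by (rule emeasure_Diff) (auto simp: box_subset_cbox emeasure_lborel_box_eq)
  also have "\<dots> = 0"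
    by (simp add: emeasure_lborel_box_eq emeasure_lborel_cbox_eq)
  finally show "cbox a b - box a b \<in> null_sets lborel"
    by (auto simp: null_sets_def)
qed

lemma AE_zero_on_cbox_if_orthogonal_to_test_funs:
  assumes "open \<Omega>" "bounded \<Omega>" and D: "L2 \<Omega> D"
    and orth: "\<And>\<phi>. test_fun \<Omega> \<phi> \<Longrightarrow> (LINT x:\<Omega>|lborel. D x * \<phi> x) = 0"
    and sub: "cbox a b \<subseteq> \<Omega>"
  shows "AE x in lborel. x \<in> cbox a b \<longrightarrow> D x = 0"
proof -
  define h where "h x = indicator (cbox a b) x * D x" for x
  have "h = (\<lambda>x. (indicator \<Omega> x * D x) * indicator (cbox a b) x)"
    using sub by (auto simp: h_def fun_eq_iff indicator_def)
  then have h_int: "integrable lborel h"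
    using L2_integrable[OF assms(1-3)] by (simp add: integrable_real_mult_indicator)
  have "AE x in lborel. h x = 0"
  proof (rule AE_zero_if_box_integrals_zero[OF h_int])
    fix c d :: "real^2"
    define a' :: "real^2" where "a' = (\<chi> i. max (c$i) (a$i))"
    define b' :: "real^2" where "b' = (\<chi> i. min (d$i) (b$i))"
    have boxes: "box c d \<inter> box a b = box a' b'"
      by (auto simp: a'_def b'_def mem_box_cart)
    have sub': "cbox a' b' \<subseteq> \<Omega>"
      using sub by (auto simp: a'_def b'_def mem_box_cart)
    have "integral\<^sup>L lborel (\<lambda>x. indicator (box c d) x * h x) = integral\<^sup>L lborel (\<lambda>x. indicator (box a' b') x * D x)"
    proof (rule integral_cong_AE)
      show "(\<lambda>x. indicator (box c d) x * h x) \<in> borel_measurable lborel"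
        using h_int by auto
      have "(\<lambda>x. indicator (box a' b') x * D x) = (\<lambda>x. indicator (box a' b') x * (indicator \<Omega> x * D x))"
        using sub' box_subset_cbox by (auto simp: fun_eq_iff indicator_def)
      then show "(\<lambda>x. indicator (box a' b') x * D x) \<in> borel_measurable lborel"
        using L2_measurable[OF D] by simp
      show "AE x in lborel. indicator (box c d) x * h x = indicator (box a' b') x * D x"
        using AE_not_in_cbox_minus_box[of a b]
        by eventually_elim (use boxes box_subset_cbox[of a b] in \<open>auto simp: h_def indicator_def\<close>)
    qed
    then show "integral\<^sup>L lborel (\<lambda>x. indicator (box c d) x * h x) = 0"
      using box_integral_zero_if_orthogonal_to_test_funs[OF assms(1-4) sub'] by simp
  qed
  then show ?thesis
    by eventually_elim (auto simp: h_def)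
qed

theorem fundamental_lemma_calculus_of_variations:
  assumes "open \<Omega>" "bounded \<Omega>" and D: "L2 \<Omega> D"
    and orth: "\<And>\<phi>. test_fun \<Omega> \<phi> \<Longrightarrow> (LINT x:\<Omega>|lborel. D x * \<phi> x) = 0"
  shows "AE x in lborel. x \<in> \<Omega> \<longrightarrow> D x = 0"
proof -
  obtain \<D> where \<D>: "countable \<D>" "\<D> \<subseteq> Pow \<Omega>" "\<And>X. X \<in> \<D> \<Longrightarrow> \<exists>a b. X = cbox a b" "\<Union>\<D> = \<Omega>"
    using open_countable_Union_open_cbox[OF assms(1)] by blast
  have "\<forall>X\<in>\<D>. AE x in lborel. x \<in> X \<longrightarrow> D x = 0"
    using \<D>(2,3) AE_zero_on_cbox_if_orthogonal_to_test_funs[OF assms] by blast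
  then have "AE x in lborel. \<forall>X\<in>\<D>. x \<in> X \<longrightarrow> D x = 0"
    by (subst AE_ball_countable[OF \<D>(1)])
  then show ?thesis
    by eventually_elim (use \<D>(4) in auto)
qed

section \<open>Weak derivatives\<close>

lemma weak_pd_iff_ipS:
  "weak_pd \<Omega> i u g \<longleftrightarrow> (\<forall>\<phi>. test_fun \<Omega> \<phi> \<longrightarrow> ipS \<Omega> u (pd i \<phi>) = - ipS \<Omega> g \<phi>)"
  unfolding weak_pd_def ipS_def ..

lemma weak_pd_unique:
  assumes "open \<Omega>" "bounded \<Omega>" and g: "L2 \<Omega> g1" "L2 \<Omega> g2"
    and "weak_pd \<Omega> i u g1" "weak_pd \<Omega> i u g2"
  shows "AE x in lborel. x \<in> \<Omega> \<longrightarrow> g1 x = g2 x"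
proof -
  have "AE x in lborel. x \<in> \<Omega> \<longrightarrow> g1 x - g2 x = 0"
  proof (rule fundamental_lemma_calculus_of_variations[OF assms(1,2) L2_diff[OF g]])
    fix \<phi> assume \<phi>: "test_fun \<Omega> \<phi>"
    have "ipS \<Omega> (\<lambda>x. g1 x - g2 x) \<phi> = ipS \<Omega> g1 \<phi> - ipS \<Omega> g2 \<phi>"
      using g test_fun_L2[OF assms(1,2) \<phi>] by (rule ipS_diff_left)
    also have "\<dots> = 0"
      using assms(5,6) \<phi> unfolding weak_pd_iff_ipS by simp
    finally show "(LINT x:\<Omega>|lborel. (g1 x - g2 x) * \<phi> x) = 0"
      by (simp add: ipS_def)
  qed
  then show ?thesis by auto
qed

lemma H1_L2: "H1 \<Omega> u \<Longrightarrow> L2 \<Omega> u"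
  unfolding H1_def by blast

lemma
  assumes "H1 \<Omega> u"
  shows L2_wpd: "L2 \<Omega> (wpd \<Omega> i u)" and weak_pd_wpd: "weak_pd \<Omega> i u (wpd \<Omega> i u)"
proof -
  have "\<exists>g. L2 \<Omega> g \<and> weak_pd \<Omega> i u g"
    using assms unfolding H1_def by blast
  then have "L2 \<Omega> (wpd \<Omega> i u) \<and> weak_pd \<Omega> i u (wpd \<Omega> i u)"
    unfolding wpd_def by (rule someI_ex)
  then show "L2 \<Omega> (wpd \<Omega> i u)" "weak_pd \<Omega> i u (wpd \<Omega> i u)" by auto
qed

lemma wpd_AE_eq:
  "open \<Omega> \<Longrightarrow> bounded \<Omega> \<Longrightarrow> H1 \<Omega> u \<Longrightarrow> L2 \<Omega> g \<Longrightarrow> weak_pd \<Omega> i u g \<Longrightarrow>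
    AE x in lborel. x \<in> \<Omega> \<longrightarrow> wpd \<Omega> i u x = g x"
  by (rule weak_pd_unique[OF _ _ L2_wpd _ weak_pd_wpd]) assumption+

lemma weak_pd_lincomb:
  assumes "open \<Omega>" "bounded \<Omega>" and L: "L2 \<Omega> u" "L2 \<Omega> v" "L2 \<Omega> g1" "L2 \<Omega> g2"
    and w: "weak_pd \<Omega> i u g1" "weak_pd \<Omega> i v g2"
  shows "weak_pd \<Omega> i (\<lambda>x. a * u x + c * v x) (\<lambda>x. a * g1 x + c * g2 x)"
  unfolding weak_pd_iff_ipS
proof (intro allI impI)
  fix \<phi> assume \<phi>: "test_fun \<Omega> \<phi>"
  have "ipS \<Omega> (\<lambda>x. a * u x + c * v x) (pd i \<phi>) = a * ipS \<Omega> u (pd i \<phi>) + c * ipS \<Omega> v (pd i \<phi>)"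
    using L test_fun_pd_L2[OF assms(1,2) \<phi>] by (simp add: ipS_linear_left)
  also have "\<dots> = - (a * ipS \<Omega> g1 \<phi> + c * ipS \<Omega> g2 \<phi>)"
    using w \<phi> unfolding weak_pd_iff_ipS by simp
  also have "a * ipS \<Omega> g1 \<phi> + c * ipS \<Omega> g2 \<phi> = ipS \<Omega> (\<lambda>x. a * g1 x + c * g2 x) \<phi>"
    using L test_fun_L2[OF assms(1,2) \<phi>] by (simp add: ipS_linear_left)
  finally show "ipS \<Omega> (\<lambda>x. a * u x + c * v x) (pd i \<phi>) = - ipS \<Omega> (\<lambda>x. a * g1 x + c * g2 x) \<phi>" .
qed

lemma H1_lincomb:
  assumes "open \<Omega>" "bounded \<Omega>" "H1 \<Omega> u" "H1 \<Omega> v"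
  shows "H1 \<Omega> (\<lambda>x. a * u x + c * v x)"
  unfolding H1_def
proof (intro conjI allI)
  show "L2 \<Omega> (\<lambda>x. a * u x + c * v x)"
    using assms H1_L2 L2_lincomb by blast
  show "\<exists>g. L2 \<Omega> g \<and> weak_pd \<Omega> i (\<lambda>x. a * u x + c * v x) g" for i
    using weak_pd_lincomb[OF assms(1,2) H1_L2[OF assms(3)] H1_L2[OF assms(4)]
        L2_wpd[OF assms(3)] L2_wpd[OF assms(4)] weak_pd_wpd[OF assms(3)] weak_pd_wpd[OF assms(4)]]
      L2_lincomb[OF L2_wpd[OF assms(3)] L2_wpd[OF assms(4)]]
    by blast
qed

lemma wpd_lincomb_AE:
  assumes "open \<Omega>" "bounded \<Omega>" "H1 \<Omega> u" "H1 \<Omega> v"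
  shows "AE x in lborel. x \<in> \<Omega> \<longrightarrow> wpd \<Omega> i (\<lambda>x. a * u x + c * v x) x = a * wpd \<Omega> i u x + c * wpd \<Omega> i v x"
  by (rule wpd_AE_eq[OF assms(1,2) H1_lincomb[OF assms] L2_lincomb[OF L2_wpd[OF assms(3)] L2_wpd[OF assms(4)]]
      weak_pd_lincomb[OF assms(1,2) H1_L2[OF assms(3)] H1_L2[OF assms(4)]
        L2_wpd[OF assms(3)] L2_wpd[OF assms(4)] weak_pd_wpd[OF assms(3)] weak_pd_wpd[OF assms(4)]]])

lemma H1_diff: "open \<Omega> \<Longrightarrow> bounded \<Omega> \<Longrightarrow> H1 \<Omega> u \<Longrightarrow> H1 \<Omega> v \<Longrightarrow> H1 \<Omega> (\<lambda>x. u x - v x)"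
  using H1_lincomb[of \<Omega> u v 1 "-1"] by simp

lemma wpd_diff_AE:
  "open \<Omega> \<Longrightarrow> bounded \<Omega> \<Longrightarrow> H1 \<Omega> u \<Longrightarrow> H1 \<Omega> v \<Longrightarrow>
    AE x in lborel. x \<in> \<Omega> \<longrightarrow> wpd \<Omega> i (\<lambda>x. u x - v x) x = wpd \<Omega> i u x - wpd \<Omega> i v x"
  using wpd_lincomb_AE[of \<Omega> u v i 1 "-1"] by simp

lemma H1_cmult: "open \<Omega> \<Longrightarrow> bounded \<Omega> \<Longrightarrow> H1 \<Omega> u \<Longrightarrow> H1 \<Omega> (\<lambda>x. a * u x)"
  using H1_lincomb[of \<Omega> u u a 0] by simp

lemma wpd_cmult_AE:
  "open \<Omega> \<Longrightarrow> bounded \<Omega> \<Longrightarrow> H1 \<Omega> u \<Longrightarrow>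
    AE x in lborel. x \<in> \<Omega> \<longrightarrow> wpd \<Omega> i (\<lambda>x. a * u x) x = a * wpd \<Omega> i u x"
  using wpd_lincomb_AE[of \<Omega> u u i a 0] by simp

lemma test_fun_H1: "open \<Omega> \<Longrightarrow> bounded \<Omega> \<Longrightarrow> test_fun \<Omega> \<phi> \<Longrightarrow> H1 \<Omega> \<phi>"
  unfolding H1_def using test_fun_L2[of \<Omega> \<phi>] test_fun_pd_L2[of \<Omega> \<phi>] weak_pd_test_fun[of \<Omega> \<phi>] by blast

lemma gradS_self_nonneg: "0 \<le> gradS \<Omega> p p"
  unfolding gradS_def by (intro sum_nonneg) (simp add: ipS_self_nonneg)

lemma gradV_self_nonneg: "0 \<le> gradV \<Omega> v v"
  unfolding gradV_def by (intro sum_nonneg) (simp add: gradS_self_nonneg)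

lemma ipS_wpd_self_le_gradS: "ipS \<Omega> (wpd \<Omega> j r) (wpd \<Omega> j r) \<le> gradS \<Omega> r r"
  unfolding gradS_def by (rule member_le_sum) (auto simp: ipS_self_nonneg)

text \<open>Integration by parts holds for \<open>w\<close> replaced by a test function by the definition of the
  weak derivative of \<open>q\<close>; both sides are continuous in \<open>w\<close> for the \<open>H\<^sup>1\<close> norm, and \<open>H\<^sup>1\<^sub>0\<close> is the
  \<open>H\<^sup>1\<close>-closure of the test functions.\<close>

lemma ibp_defect_bound:
  assumes "H1 \<Omega> r" "H1 \<Omega> q" "0 < s"
  shows "2 * \<bar>ipS \<Omega> (wpd \<Omega> j r) q + ipS \<Omega> r (wpd \<Omega> j q)\<bar>
    \<le> s * H1norm2 \<Omega> r + (ipS \<Omega> q q + ipS \<Omega> (wpd \<Omega> j q) (wpd \<Omega> j q)) / s"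
proof -
  have "2 * \<bar>ipS \<Omega> (wpd \<Omega> j r) q\<bar> \<le> s * ipS \<Omega> (wpd \<Omega> j r) (wpd \<Omega> j r) + ipS \<Omega> q q / s"
    using assms by (intro ipS_young L2_wpd H1_L2)
  moreover have "2 * \<bar>ipS \<Omega> r (wpd \<Omega> j q)\<bar> \<le> s * ipS \<Omega> r r + ipS \<Omega> (wpd \<Omega> j q) (wpd \<Omega> j q) / s"
    using assms by (intro ipS_young L2_wpd H1_L2)
  moreover have "s * ipS \<Omega> (wpd \<Omega> j r) (wpd \<Omega> j r) + s * ipS \<Omega> r r \<le> s * H1norm2 \<Omega> r"
    using mult_left_mono[OF ipS_wpd_self_le_gradS, of s] assms(3)
    by (simp add: H1norm2_def algebra_simps)
  ultimately show ?thesis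
    using abs_triangle_ineq[of "ipS \<Omega> (wpd \<Omega> j r) q" "ipS \<Omega> r (wpd \<Omega> j q)"]
    by (simp add: add_divide_distrib)
qed

lemma ibp_defect_diff_test_fun:
  assumes "open \<Omega>" "bounded \<Omega>" "H1 \<Omega> w" "H1 \<Omega> q" "test_fun \<Omega> \<phi>"
  shows "ipS \<Omega> (wpd \<Omega> j (\<lambda>x. w x - \<phi> x)) q + ipS \<Omega> (\<lambda>x. w x - \<phi> x) (wpd \<Omega> j q)
    = ipS \<Omega> (wpd \<Omega> j w) q + ipS \<Omega> w (wpd \<Omega> j q)"
proof -
  have \<phi>: "H1 \<Omega> \<phi>" "L2 \<Omega> \<phi>" "L2 \<Omega> (pd j \<phi>)"
    using test_fun_H1[OF assms(1,2,5)] test_fun_L2[OF assms(1,2,5)] test_fun_pd_L2[OF assms(1,2,5)]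
    by auto
  have L: "L2 \<Omega> w" "L2 \<Omega> (wpd \<Omega> j w)" "L2 \<Omega> q" "L2 \<Omega> (wpd \<Omega> j q)"
    using L2_wpd[OF assms(3)] L2_wpd[OF assms(4)] H1_L2[OF assms(3)] H1_L2[OF assms(4)]
    by auto
  have "AE x in lborel. x \<in> \<Omega> \<longrightarrow> wpd \<Omega> j (\<lambda>x. w x - \<phi> x) x = wpd \<Omega> j w x - pd j \<phi> x"
    using wpd_diff_AE[OF assms(1-3) \<phi>(1), of j] wpd_AE_eq[OF assms(1,2) \<phi>(1,3) weak_pd_test_fun[OF assms(1,2,5)]]
    by eventually_elim auto
  then have "ipS \<Omega> (wpd \<Omega> j (\<lambda>x. w x - \<phi> x)) q = ipS \<Omega> (\<lambda>x. wpd \<Omega> j w x - pd j \<phi> x) q"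
    using assms \<phi> L by (intro ipS_cong_AE L2_wpd H1_diff L2_diff) auto
  also have "\<dots> = ipS \<Omega> (wpd \<Omega> j w) q - ipS \<Omega> (pd j \<phi>) q"
    using \<phi> L by (intro ipS_diff_left)
  finally have "ipS \<Omega> (wpd \<Omega> j (\<lambda>x. w x - \<phi> x)) q = ipS \<Omega> (wpd \<Omega> j w) q - ipS \<Omega> (pd j \<phi>) q" .
  moreover have "ipS \<Omega> (\<lambda>x. w x - \<phi> x) (wpd \<Omega> j q) = ipS \<Omega> w (wpd \<Omega> j q) - ipS \<Omega> \<phi> (wpd \<Omega> j q)"
    using \<phi> L by (intro ipS_diff_left)
  moreover have "ipS \<Omega> (pd j \<phi>) q + ipS \<Omega> \<phi> (wpd \<Omega> j q) = 0"
    using weak_pd_wpd[OF assms(4), of j] assms(5) unfolding weak_pd_iff_ipS by (simp add: ipS_commute)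
  ultimately show ?thesis by simp
qed

theorem H01_integration_by_parts:
  assumes "open \<Omega>" "bounded \<Omega>" and w: "H01 \<Omega> w" and q: "H1 \<Omega> q"
  shows "ipS \<Omega> (wpd \<Omega> j w) q = - ipS \<Omega> w (wpd \<Omega> j q)"
proof -
  define A where "A = ipS \<Omega> (wpd \<Omega> j w) q + ipS \<Omega> w (wpd \<Omega> j q)"
  define C where "C = ipS \<Omega> q q + ipS \<Omega> (wpd \<Omega> j q) (wpd \<Omega> j q)"
  have wH: "H1 \<Omega> w"
    using w unfolding H01_def by blast
  have "0 \<le> C"
    by (simp add: C_def ipS_self_nonneg)
  have bound: "2 * \<bar>A\<bar> \<le> \<delta> * (1 + C)" if "0 < \<delta>" for \<delta>
  proof -
    obtain \<phi> where \<phi>: "test_fun \<Omega> \<phi>" and small: "H1norm2 \<Omega> (\<lambda>x. w x - \<phi> x) < \<delta>\<^sup>2"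
      using w \<open>0 < \<delta>\<close> unfolding H01_def by (meson zero_less_power)
    have "2 * \<bar>A\<bar> \<le> (1 / \<delta>) * H1norm2 \<Omega> (\<lambda>x. w x - \<phi> x) + C / (1 / \<delta>)"
      using ibp_defect_bound[of \<Omega> "\<lambda>x. w x - \<phi> x" q "1 / \<delta>" j] that
        ibp_defect_diff_test_fun[OF assms(1,2) wH q \<phi>] assms(1,2) wH q test_fun_H1[OF assms(1,2) \<phi>]
      by (simp add: A_def C_def H1_diff)
    also have "\<dots> \<le> (1 / \<delta>) * \<delta>\<^sup>2 + C * \<delta>"
      using small that by (intro add_mono mult_left_mono) auto
    finally show ?thesis
      using that by (simp add: power2_eq_square algebra_simps)
  qed
  have "\<bar>A\<bar> \<le> 0 + e" if "0 < e" for e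
  proof -
    have "2 * \<bar>A\<bar> \<le> (2 * e / (1 + C)) * (1 + C)"
      using that \<open>0 \<le> C\<close> by (intro bound) simp
    then show ?thesis
      using \<open>0 \<le> C\<close> by simp
  qed
  then have "A = 0"
    by (metis abs_le_zero_iff field_le_epsilon)
  then show ?thesis
    by (simp add: A_def)
qed

section \<open>Square-integrable vector fields, gradient and divergence\<close>

instantiation "fun" :: (type, real_vector) real_vector
begin

definition scaleR_fun :: "real \<Rightarrow> ('a \<Rightarrow> 'b) \<Rightarrow> 'a \<Rightarrow> 'b" where
  "scaleR_fun r f = (\<lambda>x. r *\<^sub>R f x)"

instance
  by standard (auto simp: scaleR_fun_def fun_eq_iff algebra_simps)

end

lemma scaleR_fun_apply [simp]: "(r *\<^sub>R f) x = r *\<^sub>R f x"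
  by (simp add: scaleR_fun_def)

lemma comp_add [simp]: "comp j (F + G) = (\<lambda>x. comp j F x + comp j G x)"
  by (simp add: comp_def fun_eq_iff)

lemma comp_diff [simp]: "comp j (F - G) = (\<lambda>x. comp j F x - comp j G x)"
  by (simp add: comp_def fun_eq_iff)

lemma comp_scaleR [simp]: "comp j (c *\<^sub>R F) = (\<lambda>x. c * comp j F x)"
  by (simp add: comp_def fun_eq_iff)

lemma comp_zero [simp]: "comp j 0 = (\<lambda>x. 0)"
  by (simp add: comp_def fun_eq_iff)

definition L2V :: "(real^2) set \<Rightarrow> (real^2 \<Rightarrow> real^2) set" where
  "L2V \<Omega> = {F. \<forall>j. L2 \<Omega> (comp j F)}"

lemma subspace_L2V: "subspace (L2V \<Omega>)"
  unfolding subspace_def L2V_def by (auto intro: L2_zero L2_add L2_cmult)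

lemma ipV_eq_sum_ipS:
  assumes "u \<in> L2V \<Omega>" "w \<in> L2V \<Omega>"
  shows "ipV \<Omega> u w = (\<Sum>j\<in>UNIV. ipS \<Omega> (comp j u) (comp j w))"
proof -
  have "ipV \<Omega> u w = integral\<^sup>L lborel (\<lambda>x. \<Sum>j\<in>UNIV. indicator \<Omega> x *\<^sub>R (comp j u x * comp j w x))"
    unfolding ipV_def set_lebesgue_integral_def
    by (rule Bochner_Integration.integral_cong) (auto simp: inner_vec_def comp_def scaleR_sum_right)
  also have "\<dots> = (\<Sum>j\<in>UNIV. integral\<^sup>L lborel (\<lambda>x. indicator \<Omega> x *\<^sub>R (comp j u x * comp j w x)))"
    using assms L2_mult_integrable by (intro Bochner_Integration.integral_sum) (auto simp: L2V_def)
  finally show ?thesis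
    by (simp add: ipS_def set_lebesgue_integral_def)
qed

interpretation L2V: semi_inner_product "L2V \<Omega>" "ipV \<Omega>"
proof
  show "subspace (L2V \<Omega>)"
    by (rule subspace_L2V)
  fix x y z
  assume "x \<in> L2V \<Omega>" "y \<in> L2V \<Omega>" "z \<in> L2V \<Omega>"
  then show "ipV \<Omega> (x + y) z = ipV \<Omega> x z + ipV \<Omega> y z"
    using subspace_add[OF subspace_L2V]
    by (simp add: ipV_eq_sum_ipS L2V_def ipS_add_left sum.distrib)
next
  fix x z a
  assume "x \<in> L2V \<Omega>" "z \<in> L2V \<Omega>"
  then show "ipV \<Omega> (a *\<^sub>R x) z = a * ipV \<Omega> x z"
    using subspace_mul[OF subspace_L2V]
    by (simp add: ipV_eq_sum_ipS L2V_def sum_distrib_left ipS_cmult_left)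
next
  show "ipV \<Omega> x y = ipV \<Omega> y x" for x y
    unfolding ipV_def by (simp add: inner_commute)
  show "0 \<le> ipV \<Omega> x x" for x
    unfolding ipV_def set_lebesgue_integral_def by (rule integral_nonneg_AE) auto
qed

definition grad_field :: "(real^2) set \<Rightarrow> (real^2 \<Rightarrow> real) \<Rightarrow> real^2 \<Rightarrow> real^2" where
  "grad_field \<Omega> p = (\<lambda>x. \<chi> i. wpd \<Omega> i p x)"

lemma comp_grad_field [simp]: "comp j (grad_field \<Omega> p) = wpd \<Omega> j p"
  by (simp add: comp_def grad_field_def)

lemma grad_field_L2V: "H1 \<Omega> p \<Longrightarrow> grad_field \<Omega> p \<in> L2V \<Omega>"
  by (simp add: L2V_def L2_wpd)

lemma H01V_comp_H1: "H01V \<Omega> v \<Longrightarrow> H1 \<Omega> (comp j v)"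
  unfolding H01V_def H01_def by blast

lemma H01V_L2V: "H01V \<Omega> v \<Longrightarrow> v \<in> L2V \<Omega>"
  by (simp add: L2V_def H01V_comp_H1 H1_L2)

lemma gradS_eq_ipV_grad_field: "H1 \<Omega> p \<Longrightarrow> H1 \<Omega> q \<Longrightarrow> gradS \<Omega> p q = ipV \<Omega> (grad_field \<Omega> p) (grad_field \<Omega> q)"
  by (simp add: gradS_def ipV_eq_sum_ipS grad_field_L2V)

lemma gradS_diff_eq_ipV_grad_field:
  assumes "open \<Omega>" "bounded \<Omega>" "H1 \<Omega> p" "H1 \<Omega> p'"
  shows "gradS \<Omega> (\<lambda>x. p x - p' x) (\<lambda>x. p x - p' x)
    = ipV \<Omega> (grad_field \<Omega> p - grad_field \<Omega> p') (grad_field \<Omega> p - grad_field \<Omega> p')"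
proof -
  have "ipS \<Omega> (wpd \<Omega> i (\<lambda>x. p x - p' x)) (wpd \<Omega> i (\<lambda>x. p x - p' x))
      = ipS \<Omega> (\<lambda>x. wpd \<Omega> i p x - wpd \<Omega> i p' x) (\<lambda>x. wpd \<Omega> i p x - wpd \<Omega> i p' x)" for i
    using wpd_diff_AE[OF assms, of i] L2_wpd[OF H1_diff[OF assms]] L2_diff[OF L2_wpd[OF assms(3)] L2_wpd[OF assms(4)]]
    by (intro ipS_cong_AE) auto
  moreover have "grad_field \<Omega> p - grad_field \<Omega> p' \<in> L2V \<Omega>"
    using grad_field_L2V[OF assms(3)] grad_field_L2V[OF assms(4)] subspace_diff[OF subspace_L2V] by blast
  ultimately show ?thesis
    by (simp add: gradS_def ipV_eq_sum_ipS)
qed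

lemma ipS_divg:
  assumes "open \<Omega>" "bounded \<Omega>" and v: "H01V \<Omega> v" and p: "H1 \<Omega> p"
  shows "ipS \<Omega> p (divg \<Omega> v) = - ipV \<Omega> v (grad_field \<Omega> p)"
proof -
  have L: "L2 \<Omega> (wpd \<Omega> j (comp j v))" for j
    using L2_wpd[OF H01V_comp_H1[OF v]] .
  have "ipS \<Omega> p (divg \<Omega> v) = ipS \<Omega> (divg \<Omega> v) p"
    by (rule ipS_commute)
  also have "\<dots> = (\<Sum>j\<in>UNIV. ipS \<Omega> (wpd \<Omega> j (comp j v)) p)"
    unfolding divg_def using L H1_L2[OF p] by (intro ipS_sum_left) auto
  also have "\<dots> = (\<Sum>j\<in>UNIV. - ipS \<Omega> (comp j v) (wpd \<Omega> j p))"
    using v p by (intro sum.cong refl H01_integration_by_parts assms(1,2)) (auto simp: H01V_def)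
  also have "\<dots> = - ipV \<Omega> v (grad_field \<Omega> p)"
    using H01V_L2V[OF v] grad_field_L2V[OF p] by (simp add: ipV_eq_sum_ipS sum_negf)
  finally show ?thesis .
qed

lemma gradV_scaleR_self:
  assumes "open \<Omega>" "bounded \<Omega>" "H01V \<Omega> v"
  shows "gradV \<Omega> (\<lambda>x. c *\<^sub>R v x) (\<lambda>x. c *\<^sub>R v x) = c\<^sup>2 * gradV \<Omega> v v"
  unfolding gradV_def gradS_def sum_distrib_left
proof (intro sum.cong refl)
  fix i j
  have H: "H1 \<Omega> (comp j v)"
    using H01V_comp_H1[OF assms(3)] .
  have "comp j (\<lambda>x. c *\<^sub>R v x) = (\<lambda>x. c * comp j v x)"
    by (simp add: comp_def)
  moreover have "ipS \<Omega> (wpd \<Omega> i (\<lambda>x. c * comp j v x)) (wpd \<Omega> i (\<lambda>x. c * comp j v x))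
      = ipS \<Omega> (\<lambda>x. c * wpd \<Omega> i (comp j v) x) (\<lambda>x. c * wpd \<Omega> i (comp j v) x)"
    using wpd_cmult_AE[OF assms(1,2) H, of i c] L2_wpd[OF H1_cmult[OF assms(1,2) H]] L2_cmult[OF L2_wpd[OF H]]
    by (intro ipS_cong_AE) auto
  moreover have "\<dots> = c\<^sup>2 * ipS \<Omega> (wpd \<Omega> i (comp j v)) (wpd \<Omega> i (comp j v))"
    using ipS_lincomb_self[OF L2_wpd[OF H, of i] L2_wpd[OF H, of i], of c 0] by simp
  ultimately show "ipS \<Omega> (wpd \<Omega> i (comp j (\<lambda>x. c *\<^sub>R v x))) (wpd \<Omega> i (comp j (\<lambda>x. c *\<^sub>R v x)))
      = c\<^sup>2 * ipS \<Omega> (wpd \<Omega> i (comp j v)) (wpd \<Omega> i (comp j v))"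
    by simp
qed

section \<open>The reduced scheme\<close>

lemma fin_dim_subspaceV_H01V: "fin_dim_subspaceV \<Omega> U \<Longrightarrow> v \<in> U \<Longrightarrow> H01V \<Omega> v"
  unfolding fin_dim_subspaceV_def by blast

lemma fin_dim_subspaceS_H1: "fin_dim_subspaceS \<Omega> Q \<Longrightarrow> q \<in> Q \<Longrightarrow> H1 \<Omega> q"
  unfolding fin_dim_subspaceS_def by blast

lemma fin_dim_subspaceV_scaleR:
  assumes "fin_dim_subspaceV \<Omega> U" "v \<in> U"
  shows "(\<lambda>x. a *\<^sub>R v x) \<in> U"
proof -
  obtain B where B: "U = {(\<lambda>x. \<Sum>b\<in>B. c b *\<^sub>R b x) | c. True}"
    using assms(1) unfolding fin_dim_subspaceV_def by blast
  then obtain c where "v = (\<lambda>x. \<Sum>b\<in>B. c b *\<^sub>R b x)"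
    using assms(2) by blast
  then have "(\<lambda>x. a *\<^sub>R v x) = (\<lambda>x. \<Sum>b\<in>B. (a * c b) *\<^sub>R b x)"
    by (simp add: scaleR_sum_right)
  then show ?thesis
    unfolding B by (intro CollectI exI[of _ "\<lambda>b. a * c b"]) simp
qed

lemma bdd_above_normHm1:
  assumes "Hminus1 \<Omega> F"
  shows "bdd_above {\<bar>F v\<bar> | v. H01V \<Omega> v \<and> gradV \<Omega> v v \<le> 1}"
proof -
  obtain C where C: "\<And>v. H01V \<Omega> v \<Longrightarrow> \<bar>F v\<bar> \<le> C * sqrt (gradV \<Omega> v v)"
    using assms unfolding Hminus1_def by blast
  have "\<bar>F v\<bar> \<le> max C 0" if "H01V \<Omega> v" "gradV \<Omega> v v \<le> 1" for v
  proof -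
    have "0 \<le> sqrt (gradV \<Omega> v v)" "sqrt (gradV \<Omega> v v) \<le> 1"
      using that(2) gradV_self_nonneg by auto
    then have "C * sqrt (gradV \<Omega> v v) \<le> max C 0"
      by (cases "0 \<le> C") (auto simp: mult_left_le mult_nonpos_nonneg)
    then show ?thesis
      using C[OF that(1)] by simp
  qed
  then show ?thesis
    by (auto intro: bdd_aboveI[of _ "max C 0"])
qed

lemma abs_le_normHm1:
  assumes "open \<Omega>" "bounded \<Omega>" "Hminus1 \<Omega> F" and U: "fin_dim_subspaceV \<Omega> U" "v \<in> U"
  shows "\<bar>F v\<bar> \<le> normHm1 \<Omega> F * sqrt (gradV \<Omega> v v)"
proof -
  have v: "H01V \<Omega> v"
    using fin_dim_subspaceV_H01V[OF U] .
  define s where "s = sqrt (gradV \<Omega> v v)"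
  show ?thesis
  proof (cases "s = 0")
    case True
    then show ?thesis
      using assms(3) v unfolding Hminus1_def s_def by fastforce
  next
    case False
    then have s: "0 < s"
      using gradV_self_nonneg[of \<Omega> v] by (simp add: s_def)
    define w where "w = (\<lambda>x. (1 / s) *\<^sub>R v x)"
    have w: "H01V \<Omega> w"
      unfolding w_def using fin_dim_subspaceV_H01V[OF U(1) fin_dim_subspaceV_scaleR[OF U]] .
    have "gradV \<Omega> w w = (1 / s)\<^sup>2 * s\<^sup>2"
      using gradV_scaleR_self[OF assms(1,2) v] gradV_self_nonneg[of \<Omega> v] by (simp add: w_def s_def)
    then have "gradV \<Omega> w w = 1"
      using s by (simp add: power2_eq_square)
    then have "\<bar>F w\<bar> \<le> normHm1 \<Omega> F"
      unfolding normHm1_def using w by (intro cSup_upper bdd_above_normHm1[OF assms(3)]) auto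
    moreover have "F w = (1 / s) * F v"
      using assms(3) v unfolding Hminus1_def w_def by blast
    ultimately show ?thesis
      using s by (simp add: s_def[symmetric] abs_mult field_simps)
  qed
qed

lemma momentum_tested:
  fixes u0 u1 u2 :: "real^2 \<Rightarrow> real^2" and p0 p1 p2 :: "real^2 \<Rightarrow> real"
  assumes "open \<Omega>" "bounded \<Omega>" "0 < \<tau>"
    and u: "H01V \<Omega> u0" "H01V \<Omega> u1" "H01V \<Omega> u2" and p: "H1 \<Omega> p0" "H1 \<Omega> p1" "H1 \<Omega> p2"
    and eq: "ipV \<Omega> (\<lambda>x. (1 / (2 * \<tau>)) *\<^sub>R (3 *\<^sub>R u2 x - 4 *\<^sub>R u1 x + u0 x)) u2 + \<nu> * gradV \<Omega> u2 u2
      - (1/3) * ipS \<Omega> (\<lambda>x. 7 * p2 x - 5 * p1 x + p0 x) (divg \<Omega> u2) = F"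
  shows "ipV \<Omega> (3 *\<^sub>R u2 - 4 *\<^sub>R u1 + u0) u2 / (2 * \<tau>) + \<nu> * gradV \<Omega> u2 u2
    + ipV \<Omega> (7 *\<^sub>R (\<tau> *\<^sub>R grad_field \<Omega> p2) - 5 *\<^sub>R (\<tau> *\<^sub>R grad_field \<Omega> p1) + \<tau> *\<^sub>R grad_field \<Omega> p0) u2
      / (3 * \<tau>) = F"
proof -
  let ?g0 = "grad_field \<Omega> p0" and ?g1 = "grad_field \<Omega> p1" and ?g2 = "grad_field \<Omega> p2"
  have mem: "u0 \<in> L2V \<Omega>" "u1 \<in> L2V \<Omega>" "u2 \<in> L2V \<Omega>" "?g0 \<in> L2V \<Omega>" "?g1 \<in> L2V \<Omega>" "?g2 \<in> L2V \<Omega>"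
    using u p by (auto intro: H01V_L2V grad_field_L2V)
  have L: "L2 \<Omega> p0" "L2 \<Omega> p1" "L2 \<Omega> p2" "L2 \<Omega> (divg \<Omega> u2)"
    using p H1_L2 L2_wpd[OF H01V_comp_H1[OF u(3)]] by (auto simp: divg_def intro!: L2_sum)
  have "(\<lambda>x. (1 / (2 * \<tau>)) *\<^sub>R (3 *\<^sub>R u2 x - 4 *\<^sub>R u1 x + u0 x)) = (1 / (2 * \<tau>)) *\<^sub>R (3 *\<^sub>R u2 - 4 *\<^sub>R u1 + u0)"
    by (simp add: fun_eq_iff)
  then have time: "ipV \<Omega> (\<lambda>x. (1 / (2 * \<tau>)) *\<^sub>R (3 *\<^sub>R u2 x - 4 *\<^sub>R u1 x + u0 x)) u2
      = ipV \<Omega> (3 *\<^sub>R u2 - 4 *\<^sub>R u1 + u0) u2 / (2 * \<tau>)"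
    using mem by (simp add: L2V.ip_simps)
  have "ipS \<Omega> (\<lambda>x. 7 * p2 x - 5 * p1 x + p0 x) (divg \<Omega> u2)
      = 7 * ipS \<Omega> p2 (divg \<Omega> u2) - 5 * ipS \<Omega> p1 (divg \<Omega> u2) + ipS \<Omega> p0 (divg \<Omega> u2)"
    using ipS_add_left[OF L2_lincomb[OF L(3) L(2), of 7 "-5"] L(1) L(4)]
      ipS_linear_left[OF L(3) L(2) L(4), of 7 "-5"] by simp
  also have "\<dots> = - (7 * ipV \<Omega> u2 ?g2 - 5 * ipV \<Omega> u2 ?g1 + ipV \<Omega> u2 ?g0)"
    using ipS_divg[OF assms(1,2) u(3)] p by simp
  finally have pressure_term: "ipS \<Omega> (\<lambda>x. 7 * p2 x - 5 * p1 x + p0 x) (divg \<Omega> u2)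
      = - (7 * ipV \<Omega> u2 ?g2 - 5 * ipV \<Omega> u2 ?g1 + ipV \<Omega> u2 ?g0)" .
  have "ipV \<Omega> (7 *\<^sub>R (\<tau> *\<^sub>R ?g2) - 5 *\<^sub>R (\<tau> *\<^sub>R ?g1) + \<tau> *\<^sub>R ?g0) u2 / (3 * \<tau>)
      = (7 * ipV \<Omega> u2 ?g2 - 5 * ipV \<Omega> u2 ?g1 + ipV \<Omega> u2 ?g0) / 3"
    using mem assms(3) by (simp add: L2V.ip_simps L2V.ip_commute[of _ u2] field_simps)
  with eq show ?thesis
    unfolding time pressure_term by linarith
qed

lemma pressure_tested:
  assumes "open \<Omega>" "bounded \<Omega>" and u: "H01V \<Omega> u" and p: "H1 \<Omega> q" "H1 \<Omega> p1" "H1 \<Omega> p0"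
    and eq: "ipS \<Omega> (divg \<Omega> u) q + (2 * \<tau> / 3) * gradS \<Omega> p1 q = (2 * \<tau> / 3) * gradS \<Omega> p0 q"
  shows "ipV \<Omega> u (\<tau> *\<^sub>R grad_field \<Omega> q)
    = (2/3) * ipV \<Omega> (\<tau> *\<^sub>R grad_field \<Omega> p1 - \<tau> *\<^sub>R grad_field \<Omega> p0) (\<tau> *\<^sub>R grad_field \<Omega> q)"
proof -
  have mem: "u \<in> L2V \<Omega>" "grad_field \<Omega> q \<in> L2V \<Omega>" "grad_field \<Omega> p1 \<in> L2V \<Omega>" "grad_field \<Omega> p0 \<in> L2V \<Omega>"
    using u p by (auto intro: H01V_L2V grad_field_L2V)
  have "ipS \<Omega> (divg \<Omega> u) q = - ipV \<Omega> u (grad_field \<Omega> q)"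
    using ipS_divg[OF assms(1-3) p(1)] ipS_commute by metis
  then have "ipV \<Omega> u (grad_field \<Omega> q)
      = (2 * \<tau> / 3) * (ipV \<Omega> (grad_field \<Omega> p1) (grad_field \<Omega> q) - ipV \<Omega> (grad_field \<Omega> p0) (grad_field \<Omega> q))"
    using eq p by (simp add: gradS_eq_ipV_grad_field algebra_simps)
  moreover have "ipV \<Omega> u (\<tau> *\<^sub>R grad_field \<Omega> q) = \<tau> * ipV \<Omega> u (grad_field \<Omega> q)"
    "ipV \<Omega> (\<tau> *\<^sub>R grad_field \<Omega> p1 - \<tau> *\<^sub>R grad_field \<Omega> p0) (\<tau> *\<^sub>R grad_field \<Omega> q)
      = \<tau> * \<tau> * (ipV \<Omega> (grad_field \<Omega> p1) (grad_field \<Omega> q) - ipV \<Omega> (grad_field \<Omega> p0) (grad_field \<Omega> q))"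
    using mem by (simp_all add: L2V.ip_simps algebra_simps)
  ultimately show ?thesis
    by simp
qed

definition reduced_bdf2_solution ::
  "(real^2) set \<Rightarrow> real \<Rightarrow> real \<Rightarrow> (real \<Rightarrow> ((real^2 \<Rightarrow> real^2) \<Rightarrow> real)) \<Rightarrow> (real^2 \<Rightarrow> real^2) set \<Rightarrow>
    (real^2 \<Rightarrow> real) set \<Rightarrow> nat \<Rightarrow> (nat \<Rightarrow> real^2 \<Rightarrow> real^2) \<Rightarrow> (nat \<Rightarrow> real^2 \<Rightarrow> real) \<Rightarrow> bool"
where
  "reduced_bdf2_solution \<Omega> \<tau> \<nu> f U Q N u p \<longleftrightarrow>
     \<tau> > 0 \<and> \<nu> > 0 \<and>
     fin_dim_subspaceV \<Omega> U \<and> fin_dim_subspaceS \<Omega> Q \<and>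
     (\<forall>k\<le>N. Hminus1 \<Omega> (f (real k * \<tau>))) \<and>
     (\<forall>k\<le>N. u k \<in> U \<and> p k \<in> Q) \<and>
     (\<forall>n. 1 \<le> n \<and> n + 1 \<le> N \<longrightarrow>
        (\<forall>v\<in>U.
           ipV \<Omega> (\<lambda>x. (1 / (2 * \<tau>)) *\<^sub>R (3 *\<^sub>R u (n+1) x - 4 *\<^sub>R u n x + u (n-1) x)) v
           + \<nu> * gradV \<Omega> (u (n+1)) v
           - (1/3) * ipS \<Omega> (\<lambda>x. 7 * p n x - 5 * p (n-1) x + p (n-2) x) (divg \<Omega> v)
           = f (real (n+1) * \<tau>) v) \<and>
        (\<forall>q\<in>Q.
           ipS \<Omega> (divg \<Omega> (u (n+1))) q + (2 * \<tau> / 3) * gradS \<Omega> (p (n+1)) q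
           = (2 * \<tau> / 3) * gradS \<Omega> (p n) q))"

lemma reduced_bdf2_solution_bdf2_scheme:
  assumes "open \<Omega>" "bounded \<Omega>" and sol: "reduced_bdf2_solution \<Omega> \<tau> \<nu> f U Q N u p"
  shows "bdf2_scheme (L2V \<Omega>) (ipV \<Omega>) N \<tau> \<nu> u (\<lambda>k. \<tau> *\<^sub>R grad_field \<Omega> (p k))
    (\<lambda>k. gradV \<Omega> (u k) (u k)) (\<lambda>k. f (real k * \<tau>) (u k)) (\<lambda>k. normHm1 \<Omega> (f (real k * \<tau>)))"
proof -
  have fin: "fin_dim_subspaceV \<Omega> U" "fin_dim_subspaceS \<Omega> Q" and tau: "0 < \<tau>"
    and mem: "\<And>k. k \<le> N \<Longrightarrow> u k \<in> U \<and> p k \<in> Q"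
    using sol by (auto simp: reduced_bdf2_solution_def)
  have uH: "H01V \<Omega> (u k)" and pH: "H1 \<Omega> (p k)" if "k \<le> N" for k
    using mem[OF that] fin fin_dim_subspaceV_H01V fin_dim_subspaceS_H1 by blast+
  show ?thesis
  proof (unfold_locales)
    fix n assume n: "1 \<le> n" "n + 1 \<le> N"
    show "ipV \<Omega> (3 *\<^sub>R u (n+1) - 4 *\<^sub>R u n + u (n-1)) (u (n+1)) / (2 * \<tau>) + \<nu> * gradV \<Omega> (u (n+1)) (u (n+1))
      + ipV \<Omega> (7 *\<^sub>R (\<tau> *\<^sub>R grad_field \<Omega> (p n)) - 5 *\<^sub>R (\<tau> *\<^sub>R grad_field \<Omega> (p (n-1)))
          + \<tau> *\<^sub>R grad_field \<Omega> (p (n-2))) (u (n+1)) / (3 * \<tau>)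
      = f (real (n+1) * \<tau>) (u (n+1))"
      using sol n mem[of "n+1"] uH pH tau
      by (intro momentum_tested[OF assms(1,2)]) (auto simp: reduced_bdf2_solution_def)
    fix j assume "j \<le> N"
    then show "ipV \<Omega> (u (n+1)) (\<tau> *\<^sub>R grad_field \<Omega> (p j))
      = (2/3) * ipV \<Omega> (\<tau> *\<^sub>R grad_field \<Omega> (p (n+1)) - \<tau> *\<^sub>R grad_field \<Omega> (p n)) (\<tau> *\<^sub>R grad_field \<Omega> (p j))"
      using sol n mem[of j] uH pH
      by (intro pressure_tested[OF assms(1,2)]) (auto simp: reduced_bdf2_solution_def)
  next
    fix k assume "2 \<le> k" "k \<le> N"
    then show "\<bar>f (real k * \<tau>) (u k)\<bar> \<le> normHm1 \<Omega> (f (real k * \<tau>)) * sqrt (gradV \<Omega> (u k) (u k))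
      \<and> 0 \<le> gradV \<Omega> (u k) (u k)"
      using sol mem[of k] fin gradV_self_nonneg
      by (auto simp: reduced_bdf2_solution_def intro!: abs_le_normHm1[OF assms(1,2)])
  next
    show "\<tau> *\<^sub>R grad_field \<Omega> (p k) \<in> L2V \<Omega>" if "k \<le> N" for k
      using grad_field_L2V[OF pH[OF that]] by simp
  qed (use sol uH in \<open>auto simp: reduced_bdf2_solution_def intro: H01V_L2V\<close>)
qed

theorem reduced_bdf2_stability:
  assumes "open \<Omega>" "bounded \<Omega>" and sol: "reduced_bdf2_solution \<Omega> \<tau> \<nu> f U Q N u p"
    and n: "2 \<le> n" "n \<le> N"
  shows "ipV \<Omega> (u n) (u n) + \<tau>^2 * gradS \<Omega> (p n) (p n)
      + \<tau>^2 * gradS \<Omega> (\<lambda>x. p (n-1) x - p (n-2) x) (\<lambda>x. p (n-1) x - p (n-2) x)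
      + (\<Sum>k=2..N. \<nu> * \<tau> * gradV \<Omega> (u k) (u k)
          + \<tau>^2 * gradS \<Omega> (\<lambda>x. p (k-1) x - p (k-2) x) (\<lambda>x. p (k-1) x - p (k-2) x))
    \<le> 700 * (ipV \<Omega> (u 0) (u 0) + ipV \<Omega> (u 1) (u 1)
      + \<tau>^2 * gradS \<Omega> (p 0) (p 0) + \<tau>^2 * gradS \<Omega> (p 1) (p 1)
      + (1 / \<nu>) * (\<Sum>k=2..N. \<tau> * (normHm1 \<Omega> (f (real k * \<tau>)))^2))"
proof -
  interpret bdf2_scheme "L2V \<Omega>" "ipV \<Omega>" N \<tau> \<nu> u "\<lambda>k. \<tau> *\<^sub>R grad_field \<Omega> (p k)"
    "\<lambda>k. gradV \<Omega> (u k) (u k)" "\<lambda>k. f (real k * \<tau>) (u k)" "\<lambda>k. normHm1 \<Omega> (f (real k * \<tau>))"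
    using reduced_bdf2_solution_bdf2_scheme[OF assms(1-3)] .
  have pH: "k \<le> N \<Longrightarrow> H1 \<Omega> (p k)" for k
    using sol fin_dim_subspaceS_H1 by (auto simp: reduced_bdf2_solution_def)
  have pressure: "L2V.sqnorm \<Omega> (\<tau> *\<^sub>R grad_field \<Omega> (p k)) = \<tau>\<^sup>2 * gradS \<Omega> (p k) (p k)" if "k \<le> N" for k
    using pH[OF that] grad_field_L2V[OF pH[OF that]]
    by (simp add: L2V.sqnorm_scaleR) (simp add: L2V.sqnorm_def gradS_eq_ipV_grad_field)
  have pressure_diff: "L2V.sqnorm \<Omega> (\<tau> *\<^sub>R grad_field \<Omega> (p a) - \<tau> *\<^sub>R grad_field \<Omega> (p c))
      = \<tau>\<^sup>2 * gradS \<Omega> (\<lambda>x. p a x - p c x) (\<lambda>x. p a x - p c x)" if "a \<le> N" "c \<le> N" for a c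
    using grad_field_L2V[OF pH[OF that(1)]] grad_field_L2V[OF pH[OF that(2)]]
    by (simp add: scaleR_diff_right[symmetric] L2V.sqnorm_scaleR)
      (simp add: L2V.sqnorm_def gradS_diff_eq_ipV_grad_field[OF assms(1,2) pH[OF that(1)] pH[OF that(2)]])
  have "(\<Sum>k=2..N. \<nu> * \<tau> * gradV \<Omega> (u k) (u k)
        + L2V.sqnorm \<Omega> (\<tau> *\<^sub>R grad_field \<Omega> (p (k-1)) - \<tau> *\<^sub>R grad_field \<Omega> (p (k-2))))
      = (\<Sum>k=2..N. \<nu> * \<tau> * gradV \<Omega> (u k) (u k)
        + \<tau>^2 * gradS \<Omega> (\<lambda>x. p (k-1) x - p (k-2) x) (\<lambda>x. p (k-1) x - p (k-2) x))"
    by (intro sum.cong refl arg_cong2[where f = "(+)"] pressure_diff) auto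
  then show ?thesis
    using stability[OF n] n
    by (simp add: L2V.sqnorm_def[symmetric] data_def forcing_sum_def pressure pressure_diff sum_divide_distrib)
qed

theorem mainTheorem1:
  fixes \<Omega> :: "(real^2) set" and T :: real
  assumes "smooth_bounded_domain \<Omega>" and "T > 0"
  shows "\<exists>c>0. \<forall>(\<tau>::real) (\<nu>::real) (f :: real \<Rightarrow> ((real^2 \<Rightarrow> real^2) \<Rightarrow> real))
      (U :: (real^2 \<Rightarrow> real^2) set) (Q :: (real^2 \<Rightarrow> real) set)
      (u :: nat \<Rightarrow> real^2 \<Rightarrow> real^2) (p :: nat \<Rightarrow> real^2 \<Rightarrow> real).
    (let Nt = nat \<lfloor>T / \<tau>\<rfloor> in
     \<tau> > 0 \<and> \<nu> > 0 \<and>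
     fin_dim_subspaceV \<Omega> U \<and> fin_dim_subspaceS \<Omega> Q \<and>
     (\<forall>k\<le>Nt. Hminus1 \<Omega> (f (real k * \<tau>))) \<and>
     (\<forall>k\<le>Nt. u k \<in> U \<and> p k \<in> Q) \<and>
     (\<forall>n. 1 \<le> n \<and> n + 1 \<le> Nt \<longrightarrow>
        (\<forall>v\<in>U.
           ipV \<Omega> (\<lambda>x. (1 / (2 * \<tau>)) *\<^sub>R (3 *\<^sub>R u (n+1) x - 4 *\<^sub>R u n x + u (n-1) x)) v
           + \<nu> * gradV \<Omega> (u (n+1)) v
           - (1/3) * ipS \<Omega> (\<lambda>x. 7 * p n x - 5 * p (n-1) x + p (n-2) x) (divg \<Omega> v)
           = f (real (n+1) * \<tau>) v) \<and>
        (\<forall>q\<in>Q.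
           ipS \<Omega> (divg \<Omega> (u (n+1))) q + (2 * \<tau> / 3) * gradS \<Omega> (p (n+1)) q
           = (2 * \<tau> / 3) * gradS \<Omega> (p n) q))
     \<longrightarrow>
     (\<forall>n. 2 \<le> n \<and> n \<le> Nt \<longrightarrow>
        ipV \<Omega> (u n) (u n) + \<tau>^2 * gradS \<Omega> (p n) (p n)
        + \<tau>^2 * gradS \<Omega> (\<lambda>x. p (n-1) x - p (n-2) x) (\<lambda>x. p (n-1) x - p (n-2) x)
        + (\<Sum>k=2..Nt. \<nu> * \<tau> * gradV \<Omega> (u k) (u k)
              + \<tau>^2 * gradS \<Omega> (\<lambda>x. p (k-1) x - p (k-2) x) (\<lambda>x. p (k-1) x - p (k-2) x))
        \<le> c * (ipV \<Omega> (u 0) (u 0) + ipV \<Omega> (u 1) (u 1)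
              + \<tau>^2 * gradS \<Omega> (p 0) (p 0) + \<tau>^2 * gradS \<Omega> (p 1) (p 1)
              + (1 / \<nu>) * (\<Sum>k=2..Nt. \<tau> * (normHm1 \<Omega> (f (real k * \<tau>)))^2))))"
proof -
  have "open \<Omega>" "bounded \<Omega>"
    using assms(1) unfolding smooth_bounded_domain_def by auto
  note stability = reduced_bdf2_stability[OF this, unfolded reduced_bdf2_solution_def]
  show ?thesis
    unfolding Let_def
    by (intro exI[of _ "700::real"] conjI allI impI) (simp, rule stability, assumption, auto)
qed

end
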